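(* Let $A\in{\sf BDO}(\Gamma)$ and $\mathbf A:=(P_{Y_n}AP_{Y_n})_{n\ge1}$. (i) Let $h$ tend to infinity such that the limit operator $(\mathrm{Op}(\mathbf A)+P_{\Gamma'})_h$ exists, and suppose there is an integer $r\ge0$ such that for infinitely many $n$ there is $k$ with $h(n)\in v_k(\partial_\Omega Y_k)^{-1}\Omega_r$. Then one can choose a strictly increasing sequence $(k_j)$, elements $\eta_j\in(\partial_\Omega Y_{k_j})^{-1}$ and $w_*\in\Gamma$ such that $(v_{k_j}\eta_jw_* )_j$ is a subsequence of $h$, the strong limit $\mathrm{s\text{-}lim}_j P_{Y_{k_j}\eta_jw_*}=:P_{\mathcal Y^{(h)}}$ exists for some set $\mathcal Y^{(h)}\subseteq\Gamma$, and there is a limit operator $A_g$ of $A$ with respect to a subsequence $g$ of $(\eta_jw_* )_j$ such that \[(\mathrm{Op}(\mathbf A)+P_{\Gamma'})_h=P_{\mathcal Y^{(h)}}A_gP_{\mathcal Y^{(h)}}+(I-P_{\mathcal Y^{(h)}}).\] (ii) Conversely, let $(k_n)$ be strictly increasing, $\eta_{k_n}\in(\partial_\Omega Y_{k_n})^{-1}$, $w_*\in\Gamma$, such that $\mathrm{s\text{-}lim}_nP_{Y_{k_n}\eta_{k_n}w_*}=P_{\mathcal Y^{(h)}}$ exists, and let $A_g$ be the limit operator of $A$ with respect to a subsequence $g=(g_r)_{r\ge1}=(\eta_{k_{n_r}}w_* )_{r\ge1}$. Then for $h:=(v_{k_{n_r}}g_r)_{r\ge1}$ the limit operator $(\mathrm{Op}(\mathbf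 A)+P_{\Gamma'})_h$ exists and equals $P_{\mathcal Y^{(h)}}A_gP_{\mathcal Y^{(h)}}+(I-P_{\mathcal Y^{(h)}})$.
   Context: $\Gamma$ is a countable discrete group with identity $e$. For $X\subseteq\Gamma$, $P_X$ is the orthogonal projection of $l^2(\Gamma)$ onto $l^2(X)$. For $r\in\Gamma$, $(L_ru)(t)=u(r^{-1}t)$ and $(R_ru)(t)=u(tr)$. ${\sf BDO}(\Gamma)$ is the smallest closed subalgebra of $L(l^2(\Gamma))$ containing all $L_r$ and all multiplication operators $aI$, $a\in l^\infty(\Gamma)$. $\Omega\subseteq\Gamma$ is finite, contains $e$, generates $\Gamma$ as a semigroup; $\Omega_0=\{e\}$, $\Omega_n$ = set of products of at most $n$ elements of $\Omega$. For $A\subseteq\Gamma$: $\mathrm{int}_\Omega A=\{a\in A:\Omega a\subseteq A\}$, $\partial_\Omega A=A\setminus\mathrm{int}_\Omega A$; set products and inverses are elementwise. $\mathcal Y=(Y_n)$ is an increasing sequence of finite subsets of $\Gamma$ with union $\Gamma$. Fix $(v_n)$ in $\Gamma$ inflating for $Z_n:=(Y_n\cup\Omega_n)(Y_n\cup\Omega_n)^{-1}(Y_n\cup\Omega_n)$, i.e. $Z_mv_m^{-1}\cap Z_nv_n^{-1}=\emptyset$ for $m\ne n$. For a bounded sequence $\mathbf A=(A_n)$ of operators on $\mathrm{im}\,P_{Y_n}$, $\mathrm{Op}(\mathbf A):=\sum_nR_{v_n}A_nP_{Y_n}R_{v_n}^{-1}$ (strongly convergent), and $\Gamma':=\Gamma\setminus\bigcup_nY_nv_n^{-1}$.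 A sequence $h:\mathbb N\to\Gamma$ tends to infinity if for each finite $\Gamma_0$, $h(n)\notin\Gamma_0$ for large $n$. For $B\in L(l^2(\Gamma))$, $B_h$ is the limit operator of $B$ with respect to $h$ if $R_{h(m)}^{-1}BR_{h(m)}\to B_h$ and $R_{h(m)}^{-1}B^*R_{h(m)}\to B_h^*$ strongly. *)

theory Defs
  imports "HOL-Analysis.Analysis" "HOL-Library.Countable"
begin

text \<open>The group \<Gamma> is a type of class group_add (not necessarily commutative) written
additively: the product t r is t + r, the inverse r^-1 is -r, the identity e is 0.\<close>

type_synonym 'g lop = "('g \<Rightarrow> complex) \<Rightarrow> ('g \<Rightarrow> complex)"

definition l2 :: "('g \<Rightarrow> complex) set" where
  "l2 = {u. (\<lambda>t. (cmod (u t))\<^sup>2) summable_on UNIV}"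

definition l2norm :: "('g \<Rightarrow> complex) \<Rightarrow> real" where
  "l2norm u = sqrt (\<Sum>\<^sub>\<infinity>t. (cmod (u t))\<^sup>2)"

definition l2inner :: "('g \<Rightarrow> complex) \<Rightarrow> ('g \<Rightarrow> complex) \<Rightarrow> complex" where
  "l2inner u v = (\<Sum>\<^sub>\<infinity>t. u t * cnj (v t))"

definition Proj :: "'g set \<Rightarrow> 'g lop" where
  "Proj X u = (\<lambda>t. if t \<in> X then u t else 0)"

definition Lsh :: "'g::group_add \<Rightarrow> 'g lop" where
  "Lsh r u = (\<lambda>t. u (- r + t))"

definition Rsh :: "'g::group_add \<Rightarrow> 'g lop" where
  "Rsh r u = (\<lambda>t. u (t + r))"

definition mult_op :: "('g \<Rightarrow> complex) \<Rightarrow> 'g lop" where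
  "mult_op a u = (\<lambda>t. a t * u t)"

inductive_set BDO_gen :: "('g::group_add) lop set" where
  shift: "Lsh r \<in> BDO_gen"
| mult: "bounded (range a) \<Longrightarrow> mult_op a \<in> BDO_gen"
| add: "S \<in> BDO_gen \<Longrightarrow> T \<in> BDO_gen \<Longrightarrow> (\<lambda>u t. S u t + T u t) \<in> BDO_gen"
| scale: "S \<in> BDO_gen \<Longrightarrow> (\<lambda>u t. c * S u t) \<in> BDO_gen"
| comp: "S \<in> BDO_gen \<Longrightarrow> T \<in> BDO_gen \<Longrightarrow> S \<circ> T \<in> BDO_gen"

definition BDO :: "('g::group_add) lop set" where
  "BDO = {A. \<forall>\<epsilon>>0. \<exists>B\<in>BDO_gen. \<forall>u\<in>l2.
      (\<lambda>t. A u t - B u t) \<in> l2 \<and> l2norm (\<lambda>t. A u t - B u t) \<le> \<epsilon> * l2norm u}"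

definition strong_conv :: "(nat \<Rightarrow> 'g lop) \<Rightarrow> 'g lop \<Rightarrow> bool" where
  "strong_conv T S \<longleftrightarrow> (\<forall>u\<in>l2. S u \<in> l2 \<and> (\<forall>n. T n u \<in> l2) \<and>
      (\<lambda>n. l2norm (\<lambda>t. T n u t - S u t)) \<longlonglongrightarrow> 0)"

definition is_adjoint :: "'g lop \<Rightarrow> 'g lop \<Rightarrow> bool" where
  "is_adjoint B C \<longleftrightarrow> (\<forall>u\<in>l2. \<forall>w\<in>l2. B u \<in> l2 \<and> C w \<in> l2 \<and>
      l2inner (B u) w = l2inner u (C w))"

definition is_limit_op :: "('g::group_add) lop \<Rightarrow> (nat \<Rightarrow> 'g) \<Rightarrow> 'g lop \<Rightarrow> bool" where
  "is_limit_op B h Bh \<longleftrightarrow>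
     strong_conv (\<lambda>m. Rsh (- h m) \<circ> B \<circ> Rsh (h m)) Bh \<and>
     (\<exists>Bs Bhs. is_adjoint B Bs \<and> is_adjoint Bh Bhs \<and>
        strong_conv (\<lambda>m. Rsh (- h m) \<circ> Bs \<circ> Rsh (h m)) Bhs)"

definition tends_to_inf :: "(nat \<Rightarrow> 'g) \<Rightarrow> bool" where
  "tends_to_inf h \<longleftrightarrow> (\<forall>F. finite F \<longrightarrow> (\<forall>\<^sub>F n in sequentially. h n \<notin> F))"

definition gmul :: "'g::group_add set \<Rightarrow> 'g set \<Rightarrow> 'g set" where
  "gmul X Z = {a + b | a b. a \<in> X \<and> b \<in> Z}"

definition ginv :: "'g::group_add set \<Rightarrow> 'g set" where
  "ginv X = uminus ` X"

fun Omega_pow :: "'g::group_add set \<Rightarrow> nat \<Rightarrow> 'g set" where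
  "Omega_pow \<Omega> 0 = {0}"
| "Omega_pow \<Omega> (Suc n) = gmul \<Omega> (Omega_pow \<Omega> n)"

definition Omega_le :: "'g::group_add set \<Rightarrow> nat \<Rightarrow> 'g set" where
  "Omega_le \<Omega> n = (\<Union>k\<le>n. Omega_pow \<Omega> k)"

definition int_Om :: "'g::group_add set \<Rightarrow> 'g set \<Rightarrow> 'g set" where
  "int_Om \<Omega> X = {a \<in> X. \<forall>w\<in>\<Omega>. w + a \<in> X}"

definition bd_Om :: "'g::group_add set \<Rightarrow> 'g set \<Rightarrow> 'g set" where
  "bd_Om \<Omega> X = X - int_Om \<Omega> X"

definition Zset :: "'g::group_add set \<Rightarrow> (nat \<Rightarrow> 'g set) \<Rightarrow> nat \<Rightarrow> 'g set" where
  "Zset \<Omega> Y n = (let W = Y n \<union> Omega_le \<Omega> n in gmul (gmul W (ginv W)) W)"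

text \<open>Op(A) = \<Sum>_{n\<ge>1} R_{v_n} A_n P_{Y_n} R_{v_n}^{-1}; the summands have pairwise disjoint
supports, so the strong limit is computed pointwise.\<close>
definition Op_seq :: "(nat \<Rightarrow> 'g::group_add) \<Rightarrow> (nat \<Rightarrow> 'g set) \<Rightarrow> (nat \<Rightarrow> 'g lop) \<Rightarrow> 'g lop" where
  "Op_seq v Y As u = (\<lambda>t. \<Sum>n. if n = 0 then 0
      else Rsh (v n) (As n (Proj (Y n) (Rsh (- v n) u))) t)"

definition Gamma' :: "(nat \<Rightarrow> 'g set) \<Rightarrow> (nat \<Rightarrow> 'g::group_add) \<Rightarrow> 'g set" where
  "Gamma' Y v = UNIV - (\<Union>n\<in>{1..}. gmul (Y n) {- v n})"

end

theory Submission
  imports Defs "HOL-Library.Diagonal_Subsequence"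
begin

(* Write OpA = Op(A) + P_Gamma'.  On the block X_n = Y_n v_n^-1 the operator OpA acts as the
   shifted compression R_{v_n} P_{Y_n} A P_{Y_n} R_{v_n}^-1, and on Gamma' as the identity.
   Since the enlarged blocks Z_n v_n^-1 are pairwise disjoint, for h_r = v_{k_r} eta_r w with
   -eta_r in Y_{k_r} the conjugate R_{h_r}^-1 OpA R_{h_r} agrees, on every finitely supported
   vector and for all large r, with the compression P_Z (R_g^-1 A R_g) P_Z + (I - P_Z), where
   g_r = eta_r w and Z_r = Y_{k_r} eta_r w.  A uniform norm bound turns this into strong
   convergence, and the same argument applied to the adjoint gives the limit formula of
   part (ii).  For part (i), the hypothesis yields a subsequence h = v_{k_j} eta_j w with
   fixed w in Omega_r and, since h tends to infinity, strictly increasing k_j; a diagonal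
   argument (Gamma is countable) makes the projections P_{Z_j} converge strongly, every
   A in BDO has a limit operator along a further subsequence, and part (ii) together with
   uniqueness of strong limits identifies the given limit operator. *)


lemma l2_summable: "u \<in> l2 \<Longrightarrow> (\<lambda>t. (cmod (u t))\<^sup>2) summable_on A"
  unfolding l2_def by (auto intro: summable_on_subset_banach)

lemma l2norm_sq: "(l2norm u)\<^sup>2 = (\<Sum>\<^sub>\<infinity>t. (cmod (u t))\<^sup>2)"
proof -
  have "0 \<le> (\<Sum>\<^sub>\<infinity>t. (cmod (u t))\<^sup>2)" by (rule infsum_nonneg) simp
  then show ?thesis unfolding l2norm_def by simp
qed

lemma l2norm_ge0[simp]: "0 \<le> l2norm u"
  unfolding l2norm_def by (simp add: infsum_nonneg)

lemma l2_finsum_le: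
  assumes "u \<in> l2" "finite F"
  shows "(\<Sum>t\<in>F. (cmod (u t))\<^sup>2) \<le> (l2norm u)\<^sup>2"
  using finite_sum_le_infsum[of "\<lambda>t. (cmod (u t))\<^sup>2" UNIV F] assms l2norm_sq[of u]
  by (simp add: l2_def)

lemma l2I:
  assumes C: "0 \<le> C" and b: "\<And>F. finite F \<Longrightarrow> (\<Sum>t\<in>F. (cmod (u t))\<^sup>2) \<le> C\<^sup>2"
  shows "u \<in> l2 \<and> l2norm u \<le> C"
proof -
  have bdd: "bdd_above (sum (\<lambda>t. (cmod (u t))\<^sup>2) ` {F. F \<subseteq> UNIV \<and> finite F})"
    using b by (intro bdd_aboveI2[where M="C\<^sup>2"]) auto
  have s: "(\<lambda>t. (cmod (u t))\<^sup>2) summable_on UNIV"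
    by (rule nonneg_bdd_above_summable_on[OF _ bdd]) auto
  have eq: "(\<Sum>\<^sub>\<infinity>t. (cmod (u t))\<^sup>2) = (SUP F\<in>{F. finite F \<and> F \<subseteq> UNIV}. (\<Sum>t\<in>F. (cmod (u t))\<^sup>2))"
    by (rule infsum_nonneg_is_SUPREMUM_real[OF s]) auto
  have "(SUP F\<in>{F. finite F \<and> F \<subseteq> UNIV}. (\<Sum>t\<in>F. (cmod (u t))\<^sup>2)) \<le> C\<^sup>2"
    by (rule cSUP_least) (use b in auto)
  then have "l2norm u \<le> sqrt (C\<^sup>2)" unfolding l2norm_def eq by (rule real_sqrt_le_mono)
  with C s show ?thesis by (simp add: l2_def)
qed

lemma l2_tail:
  assumes "u \<in> l2" "0 < e"
  shows "\<exists>F. finite F \<and> (\<lambda>t. if t \<in> F then 0 else u t) \<in> l2 \<and> l2norm (\<lambda>t. if t \<in> F then 0 else u t) \<le> e"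
proof -
  have s: "(\<lambda>t. (cmod (u t))\<^sup>2) summable_on UNIV" using assms l2_def by auto
  have eq: "(\<Sum>\<^sub>\<infinity>t. (cmod (u t))\<^sup>2) = (SUP F\<in>{F. finite F \<and> F \<subseteq> UNIV}. (\<Sum>t\<in>F. (cmod (u t))\<^sup>2))"
    by (rule infsum_nonneg_is_SUPREMUM_real[OF s]) auto
  have bdd: "bdd_above ((\<lambda>F. \<Sum>t\<in>F. (cmod (u t))\<^sup>2) ` {F. finite F \<and> F \<subseteq> UNIV})"
    using l2_finsum_le[OF assms(1)] by (intro bdd_aboveI2) auto
  have "(l2norm u)\<^sup>2 - e\<^sup>2 < (SUP F\<in>{F. finite F \<and> F \<subseteq> UNIV}. (\<Sum>t\<in>F. (cmod (u t))\<^sup>2))"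
    using eq l2norm_sq[of u] assms by simp
  then obtain F where F: "finite F" "(l2norm u)\<^sup>2 - e\<^sup>2 < (\<Sum>t\<in>F. (cmod (u t))\<^sup>2)"
    using less_cSUP_iff[OF _ bdd] by auto
  have "(\<lambda>t. if t \<in> F then 0 else u t) \<in> l2 \<and> l2norm (\<lambda>t. if t \<in> F then 0 else u t) \<le> e"
  proof (rule l2I)
    fix G :: "'a set" assume G: "finite G"
    have "(\<Sum>t\<in>G. (cmod (if t \<in> F then 0 else u t))\<^sup>2) = (\<Sum>t\<in>G - F. (cmod (u t))\<^sup>2)"
      using G by (intro sum.mono_neutral_cong_right) auto
    also have "\<dots> = (\<Sum>t\<in>G \<union> F. (cmod (u t))\<^sup>2) - (\<Sum>t\<in>F. (cmod (u t))\<^sup>2)"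
      using sum.union_disjoint[of "G - F" F "\<lambda>t. (cmod (u t))\<^sup>2"] G F by (simp add: Un_Diff_cancel2 Int_commute)
    also have "\<dots> \<le> (l2norm u)\<^sup>2 - (\<Sum>t\<in>F. (cmod (u t))\<^sup>2)"
      using l2_finsum_le[OF assms(1), of "G \<union> F"] G F by simp
    also have "\<dots> \<le> e\<^sup>2" using F by simp
    finally show "(\<Sum>t\<in>G. (cmod (if t \<in> F then 0 else u t))\<^sup>2) \<le> e\<^sup>2" .
  qed (use assms in auto)
  with F show ?thesis by blast
qed

lemma l2_dom:
  assumes "u \<in> l2" "0 \<le> c" "\<And>t. cmod (x t) \<le> c * cmod (u t)"
  shows "x \<in> l2 \<and> l2norm x \<le> c * l2norm u"
proof (rule l2I)
  show "0 \<le> c * l2norm u" using assms by simp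
  fix F :: "'a set" assume F: "finite F"
  have "(\<Sum>t\<in>F. (cmod (x t))\<^sup>2) \<le> (\<Sum>t\<in>F. c\<^sup>2 * (cmod (u t))\<^sup>2)"
    by (rule sum_mono) (metis assms(3) norm_ge_zero power_mono power_mult_distrib)
  also have "\<dots> = c\<^sup>2 * (\<Sum>t\<in>F. (cmod (u t))\<^sup>2)" by (simp add: sum_distrib_left)
  also have "\<dots> \<le> c\<^sup>2 * (l2norm u)\<^sup>2" using l2_finsum_le[OF assms(1) F] by (simp add: mult_left_mono)
  finally show "(\<Sum>t\<in>F. (cmod (x t))\<^sup>2) \<le> (c * l2norm u)\<^sup>2" by (simp add: power_mult_distrib)
qed

lemma l2_dom1:
  assumes "u \<in> l2" "\<And>t. cmod (x t) \<le> cmod (u t)"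
  shows "x \<in> l2 \<and> l2norm x \<le> l2norm u"
  using l2_dom[OF assms(1), of 1 x] assms(2) by simp

lemma L2_set_le_l2norm:
  assumes "u \<in> l2" shows "L2_set (\<lambda>t. cmod (u t)) F \<le> l2norm u"
proof (cases "finite F")
  case True
  then show ?thesis unfolding L2_set_def using l2_finsum_le[OF assms True]
    by (metis l2norm_ge0 real_sqrt_le_iff real_sqrt_unique)
qed simp

lemma l2_add:
  assumes "u \<in> l2" "w \<in> l2"
  shows "(\<lambda>t. u t + w t) \<in> l2 \<and> l2norm (\<lambda>t. u t + w t) \<le> l2norm u + l2norm w"
proof (rule l2I)
  show "0 \<le> l2norm u + l2norm w" by simp
  fix F :: "'a set" assume F: "finite F"
  have "L2_set (\<lambda>t. cmod (u t + w t)) F \<le> L2_set (\<lambda>t. cmod (u t) + cmod (w t)) F"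
    by (rule L2_set_mono) (auto intro: norm_triangle_ineq)
  also have "\<dots> \<le> L2_set (\<lambda>t. cmod (u t)) F + L2_set (\<lambda>t. cmod (w t)) F"
    by (rule L2_set_triangle_ineq)
  also have "\<dots> \<le> l2norm u + l2norm w" using assms by (intro add_mono L2_set_le_l2norm)
  finally have "sqrt (\<Sum>t\<in>F. (cmod (u t + w t))\<^sup>2) \<le> l2norm u + l2norm w"
    by (simp add: L2_set_def)
  moreover have "0 \<le> (\<Sum>t\<in>F. (cmod (u t + w t))\<^sup>2)" by (intro sum_nonneg) simp
  ultimately show "(\<Sum>t\<in>F. (cmod (u t + w t))\<^sup>2) \<le> (l2norm u + l2norm w)\<^sup>2"
    using power_mono[of "sqrt (\<Sum>t\<in>F. (cmod (u t + w t))\<^sup>2)" "l2norm u + l2norm w" 2] by simp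
qed

lemma l2_scale:
  assumes "u \<in> l2"
  shows "(\<lambda>t. c * u t) \<in> l2 \<and> l2norm (\<lambda>t. c * u t) \<le> cmod c * l2norm u"
  using l2_dom[OF assms, of "cmod c" "\<lambda>t. c * u t"] by (simp add: norm_mult)

lemma l2_diff:
  assumes "u \<in> l2" "w \<in> l2"
  shows "(\<lambda>t. u t - w t) \<in> l2 \<and> l2norm (\<lambda>t. u t - w t) \<le> l2norm u + l2norm w"
proof -
  have "(\<lambda>t. - w t) \<in> l2 \<and> l2norm (\<lambda>t. - w t) \<le> l2norm w"
    using l2_dom1[OF assms(2), of "\<lambda>t. - w t"] by simp
  then show ?thesis using l2_add[OF assms(1), of "\<lambda>t. - w t"] by auto
qed

lemma l2_triangle3:
  assumes "a \<in> l2" "b \<in> l2" "c \<in> l2"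
  shows "l2norm (\<lambda>t. a t + b t + c t) \<le> l2norm a + l2norm b + l2norm c"
  using l2_add[OF assms(1,2)] l2_add[OF l2_add[OF assms(1,2), THEN conjunct1] assms(3)] by linarith

lemma l2norm_swap: "l2norm (\<lambda>t. x t - y t) = l2norm (\<lambda>t. y t - x t)"
  unfolding l2norm_def by (simp add: norm_minus_commute)

lemma l2_zero[simp]: "(\<lambda>t. 0) \<in> l2" by (simp add: l2_def)

lemma l2norm_zero[simp]: "l2norm (\<lambda>t. 0) = 0" by (simp add: l2norm_def)

lemma l2_point:
  assumes "u \<in> l2"
  shows "cmod (u t) \<le> l2norm u"
proof -
  have "(\<Sum>s\<in>{t}. (cmod (u s))\<^sup>2) \<le> (l2norm u)\<^sup>2" by (rule l2_finsum_le[OF assms]) auto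
  then show ?thesis by (simp add: power2_le_iff_abs_le abs_le_square_iff)
qed

lemma l2norm_eq0:
  assumes "u \<in> l2" "l2norm u = 0"
  shows "u = (\<lambda>t. 0)"
  using l2_point[OF assms(1)] assms(2) by (auto intro!: ext)

lemma l2_reindex:
  assumes "bij p"
  shows "(\<lambda>t. u (p t)) \<in> l2 \<longleftrightarrow> u \<in> l2" and "l2norm (\<lambda>t. u (p t)) = l2norm u"
proof -
  have b: "bij_betw p UNIV UNIV" using assms by (simp add: bij_def)
  show "(\<lambda>t. u (p t)) \<in> l2 \<longleftrightarrow> u \<in> l2"
    unfolding l2_def using summable_on_reindex_bij_betw[OF b, of "\<lambda>t. (cmod (u t))\<^sup>2"] by simp
  show "l2norm (\<lambda>t. u (p t)) = l2norm u"
    unfolding l2norm_def using infsum_reindex_bij_betw[OF b, of "\<lambda>t. (cmod (u t))\<^sup>2"] by simp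
qed

lemma l2_finsupp:
  assumes "finite F" "\<And>t. t \<notin> F \<Longrightarrow> u t = 0"
  shows "u \<in> l2" and "(l2norm u)\<^sup>2 = (\<Sum>t\<in>F. (cmod (u t))\<^sup>2)"
proof -
  have "(\<lambda>t. (cmod (u t))\<^sup>2) summable_on UNIV"
    by (rule summable_on_cong_neutral[THEN iffD1, of _ F]) (use assms in auto)
  then show "u \<in> l2" by (simp add: l2_def)
  have "(\<Sum>\<^sub>\<infinity>t. (cmod (u t))\<^sup>2) = (\<Sum>\<^sub>\<infinity>t\<in>F. (cmod (u t))\<^sup>2)"
    by (rule infsum_cong_neutral) (use assms in auto)
  then show "(l2norm u)\<^sup>2 = (\<Sum>t\<in>F. (cmod (u t))\<^sup>2)" using l2norm_sq[of u] assms by simp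
qed

lemma l2_split:
  assumes "u \<in> l2" "0 < e"
  obtains F uF r where "finite F" "\<And>t. t \<notin> F \<Longrightarrow> uF t = 0" "uF \<in> l2" "r \<in> l2"
    "l2norm r \<le> e" "u = (\<lambda>t. uF t + r t)"
proof -
  obtain F where F: "finite F" "(\<lambda>t. if t \<in> F then 0 else u t) \<in> l2"
    "l2norm (\<lambda>t. if t \<in> F then 0 else u t) \<le> e"
    using l2_tail[OF assms] by blast
  have "\<And>t. t \<notin> F \<Longrightarrow> (if t \<in> F then u t else 0) = 0" by simp
  with F show ?thesis
    by (intro that[of F "\<lambda>t. if t \<in> F then u t else 0" "\<lambda>t. if t \<in> F then 0 else u t"])
       (auto intro: l2_finsupp(1))
qed

lemma inner_abs_summable:
  assumes "u \<in> l2" "w \<in> l2"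
  shows "(\<lambda>t. norm (u t * cnj (w t))) summable_on A"
  and "\<And>F. finite F \<Longrightarrow> (\<Sum>t\<in>F. norm (u t * cnj (w t))) \<le> l2norm u * l2norm w"
proof -
  have b: "(\<Sum>t\<in>F. norm (u t * cnj (w t))) \<le> l2norm u * l2norm w" for F
  proof -
    have "(\<Sum>t\<in>F. norm (u t * cnj (w t))) = (\<Sum>t\<in>F. \<bar>cmod (u t)\<bar> * \<bar>cmod (w t)\<bar>)"
      by (simp add: norm_mult)
    also have "\<dots> \<le> L2_set (\<lambda>t. cmod (u t)) F * L2_set (\<lambda>t. cmod (w t)) F"
      by (rule L2_set_mult_ineq)
    also have "\<dots> \<le> l2norm u * l2norm w"
      by (intro mult_mono L2_set_le_l2norm assms) auto
    finally show ?thesis .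
  qed
  then show "\<And>F. finite F \<Longrightarrow> (\<Sum>t\<in>F. norm (u t * cnj (w t))) \<le> l2norm u * l2norm w" by blast
  show "(\<lambda>t. norm (u t * cnj (w t))) summable_on A"
    unfolding abs_summable_iff_bdd_above using b by (intro bdd_aboveI2) auto
qed

lemma inner_summable:
  assumes "u \<in> l2" "w \<in> l2"
  shows "(\<lambda>t. u t * cnj (w t)) summable_on A"
  by (rule abs_summable_summable) (rule inner_abs_summable(1)[OF assms])

lemma inner_bound:
  assumes "u \<in> l2" "w \<in> l2"
  shows "cmod (l2inner u w) \<le> l2norm u * l2norm w"
proof -
  have "cmod (l2inner u w) \<le> (\<Sum>\<^sub>\<infinity>t. norm (u t * cnj (w t)))"
    unfolding l2inner_def by (rule norm_infsum_bound) (rule inner_abs_summable[OF assms])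
  also have "\<dots> \<le> l2norm u * l2norm w"
    by (rule infsum_le_finite_sums) (use inner_abs_summable[OF assms] in auto)
  finally show ?thesis .
qed

lemma inner_add_left:
  assumes "u \<in> l2" "v \<in> l2" "w \<in> l2"
  shows "l2inner (\<lambda>t. u t + v t) w = l2inner u w + l2inner v w"
  unfolding l2inner_def using infsum_add[OF inner_summable[OF assms(1,3)] inner_summable[OF assms(2,3)]]
  by (simp add: distrib_right)

lemma inner_diff_left:
  assumes "u \<in> l2" "v \<in> l2" "w \<in> l2"
  shows "l2inner (\<lambda>t. u t - v t) w = l2inner u w - l2inner v w"
proof -
  have "l2inner (\<lambda>t. u t - v t) w + l2inner v w = l2inner u w"
    using inner_add_left[OF l2_diff[OF assms(1,2), THEN conjunct1] assms(2,3)] by simp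
  then show ?thesis by (simp add: algebra_simps)
qed

lemma inner_scale_left: "l2inner (\<lambda>t. c * u t) w = c * l2inner u w"
  unfolding l2inner_def using infsum_cmult_right'[of c "\<lambda>t. u t * cnj (w t)"]
  by (simp add: mult.assoc)

lemma inner_cnj: "l2inner w u = cnj (l2inner u w)"
  unfolding l2inner_def infsum_cnj[symmetric] by (simp add: mult.commute)

lemma inner_add_right:
  assumes "u \<in> l2" "v \<in> l2" "w \<in> l2"
  shows "l2inner w (\<lambda>t. u t + v t) = l2inner w u + l2inner w v"
  using inner_add_left[OF assms] by (simp add: inner_cnj[of w])

lemma inner_diff_right:
  assumes "u \<in> l2" "v \<in> l2" "w \<in> l2"
  shows "l2inner w (\<lambda>t. u t - v t) = l2inner w u - l2inner w v"
  using inner_diff_left[OF assms] by (simp add: inner_cnj[of w])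

lemma inner_scale_right: "l2inner w (\<lambda>t. c * u t) = cnj c * l2inner w u"
  using inner_scale_left[of c u w] by (simp add: inner_cnj[of w])

definition delta :: "'a \<Rightarrow> 'a \<Rightarrow> complex" where
  "delta t = (\<lambda>s. if s = t then 1 else 0)"

lemma delta_l2[simp]: "delta t \<in> l2"
  by (rule l2_finsupp(1)[of "{t}"]) (auto simp: delta_def)

lemma inner_finsupp:
  assumes "finite F" "\<And>t. t \<notin> F \<Longrightarrow> u t = 0"
  shows "l2inner u z = (\<Sum>t\<in>F. u t * cnj (z t))"
proof -
  have "l2inner u z = (\<Sum>\<^sub>\<infinity>t\<in>F. u t * cnj (z t))"
    unfolding l2inner_def by (rule infsum_cong_neutral) (use assms in auto)
  then show ?thesis using assms by simp
qed

lemma inner_delta_right: "l2inner u (delta t) = u t"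
  using inner_finsupp[of "{t}" "delta t" u] by (simp add: delta_def inner_cnj[of u])

lemma inner_delta_left: "l2inner (delta t) z = cnj (z t)"
  using inner_finsupp[of "{t}" "delta t" z] by (simp add: delta_def)

lemma Rsh_l2:
  assumes "u \<in> l2" shows "Rsh s u \<in> l2" and "l2norm (Rsh s u) = l2norm u"
  unfolding Rsh_def using l2_reindex[OF bij_plus_right[of s], of u] assms by auto

lemma Rsh_comp: "Rsh a (Rsh b u) = Rsh (a + b) u"
  by (simp add: Rsh_def add.assoc)


lemma Rsh_0[simp]: "Rsh 0 u = u"
  by (simp add: Rsh_def)

lemma Rsh_inv1[simp]: "Rsh (- s) (Rsh s u) = u"
  by (simp add: Rsh_comp)

lemma Rsh_inv2[simp]: "Rsh s (Rsh (- s) u) = u"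
  by (simp add: Rsh_comp)

lemma inner_Rsh: "l2inner (Rsh s x) y = l2inner x (Rsh (- s) y)"
proof -
  have b: "bij_betw (\<lambda>t. t + s) UNIV UNIV" using bij_plus_right[of s] by (simp add: bij_def)
  have "l2inner x (Rsh (- s) y) = (\<Sum>\<^sub>\<infinity>t. (\<lambda>t. x t * cnj (Rsh (- s) y t)) (t + s))"
    unfolding l2inner_def using infsum_reindex_bij_betw[OF b, of "\<lambda>t. x t * cnj (Rsh (- s) y t)"] by simp
  also have "\<dots> = l2inner (Rsh s x) y"
    unfolding l2inner_def Rsh_def by (simp add: add.assoc)
  finally show ?thesis by simp
qed

lemma Proj_l2:
  assumes "u \<in> l2" shows "Proj X u \<in> l2" and "l2norm (Proj X u) \<le> l2norm u"
  using l2_dom1[OF assms, of "Proj X u"] by (auto simp: Proj_def)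

lemma Proj_Proj[simp]: "Proj X (Proj X u) = Proj X u"
  by (rule ext) (simp add: Proj_def)

lemma Proj_add: "Proj S (\<lambda>t. u t + w t) = (\<lambda>t. Proj S u t + Proj S w t)"
  by (rule ext) (simp add: Proj_def)

lemma Proj_scale: "Proj S (\<lambda>t. c * u t) = (\<lambda>t. c * Proj S u t)"
  by (rule ext) (simp add: Proj_def)

lemma inner_Proj: "l2inner (Proj X x) y = l2inner x (Proj X y)"
  unfolding l2inner_def Proj_def by (rule infsum_cong) simp


definition lin :: "'a lop \<Rightarrow> bool" where
  "lin T \<longleftrightarrow> (\<forall>u\<in>l2. \<forall>w\<in>l2. T (\<lambda>t. u t + w t) = (\<lambda>t. T u t + T w t)) \<and>
     (\<forall>u\<in>l2. \<forall>c. T (\<lambda>t. c * u t) = (\<lambda>t. c * T u t))"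

definition op_norm_le :: "'a lop \<Rightarrow> real \<Rightarrow> bool" where
  "op_norm_le T C \<longleftrightarrow> 0 \<le> C \<and> (\<forall>u\<in>l2. T u \<in> l2 \<and> l2norm (T u) \<le> C * l2norm u)"

definition bounded_op :: "'a lop \<Rightarrow> real \<Rightarrow> bool" where
  "bounded_op T C \<longleftrightarrow> lin T \<and> op_norm_le T C"

lemma linD:
  assumes "lin T" "u \<in> l2" "w \<in> l2"
  shows "T (\<lambda>t. u t + w t) = (\<lambda>t. T u t + T w t)" and "T (\<lambda>t. c * u t) = (\<lambda>t. c * T u t)"
  using assms unfolding lin_def by auto

lemma lin_zero:
  assumes "lin T" shows "T (\<lambda>t. 0) = (\<lambda>t. 0)"
  using linD(2)[OF assms l2_zero l2_zero, of 0] by simp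

lemma lin_diff:
  assumes "lin T" "u \<in> l2" "w \<in> l2"
  shows "T (\<lambda>t. u t - w t) = (\<lambda>t. T u t - T w t)"
proof -
  have m: "(\<lambda>t. - 1 * w t) \<in> l2" using l2_scale[OF assms(3)] by blast
  have "T (\<lambda>t. u t - w t) = T (\<lambda>t. u t + (- 1) * w t)" by simp
  also have "\<dots> = (\<lambda>t. T u t + T (\<lambda>t. (- 1) * w t) t)" using linD(1)[OF assms(1,2) m] by simp
  also have "\<dots> = (\<lambda>t. T u t - T w t)" using linD(2)[OF assms(1,3) assms(3), of "- 1"] by simp
  finally show ?thesis .
qed

lemma op_norm_leD:
  assumes "op_norm_le T C" "u \<in> l2"
  shows "T u \<in> l2" "l2norm (T u) \<le> C * l2norm u" "0 \<le> C"
  using assms unfolding op_norm_le_def by auto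

lemma bounded_opD:
  assumes "bounded_op T C"
  shows "lin T" "op_norm_le T C" "0 \<le> C"
  using assms unfolding bounded_op_def op_norm_le_def by auto

lemma bounded_op_diff_norm:
  assumes "bounded_op T C" "u \<in> l2" "w \<in> l2"
  shows "(\<lambda>t. T u t - T w t) \<in> l2" "l2norm (\<lambda>t. T u t - T w t) \<le> C * l2norm (\<lambda>t. u t - w t)"
proof -
  have d: "(\<lambda>t. u t - w t) \<in> l2" using l2_diff[OF assms(2,3)] by blast
  have e: "T (\<lambda>t. u t - w t) = (\<lambda>t. T u t - T w t)" using lin_diff[OF bounded_opD(1)[OF assms(1)] assms(2,3)] .
  show "(\<lambda>t. T u t - T w t) \<in> l2" using op_norm_leD(1)[OF bounded_opD(2)[OF assms(1)] d] e by simp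
  show "l2norm (\<lambda>t. T u t - T w t) \<le> C * l2norm (\<lambda>t. u t - w t)"
    using op_norm_leD(2)[OF bounded_opD(2)[OF assms(1)] d] e by simp
qed

lemma l2_sum:
  assumes "finite F" "\<And>t. t \<in> F \<Longrightarrow> g t \<in> l2"
  shows "(\<lambda>s. \<Sum>t\<in>F. g t s) \<in> l2"
  using assms
proof (induction F rule: finite_induct)
  case (insert x F)
  then have "(\<lambda>s. g x s + (\<Sum>t\<in>F. g t s)) \<in> l2" using l2_add by blast
  then show ?case using insert by simp
qed simp

lemma inner_sum_left:
  assumes "finite F" "\<And>t. t \<in> F \<Longrightarrow> g t \<in> l2" "w \<in> l2"
  shows "l2inner (\<lambda>s. \<Sum>t\<in>F. g t s) w = (\<Sum>t\<in>F. l2inner (g t) w)"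
  using assms
proof (induction F rule: finite_induct)
  case empty
  then show ?case by (simp add: l2inner_def)
next
  case (insert x F)
  have "l2inner (\<lambda>s. \<Sum>t\<in>insert x F. g t s) w = l2inner (\<lambda>s. g x s + (\<Sum>t\<in>F. g t s)) w"
    using insert by simp
  also have "\<dots> = l2inner (g x) w + l2inner (\<lambda>s. \<Sum>t\<in>F. g t s) w"
    by (rule inner_add_left) (use insert l2_sum in auto)
  finally show ?case using insert by simp
qed

lemma lin_sum:
  assumes "lin T" "finite F" "\<And>t. t \<in> F \<Longrightarrow> g t \<in> l2"
  shows "T (\<lambda>s. \<Sum>t\<in>F. g t s) = (\<lambda>s. \<Sum>t\<in>F. T (g t) s)"
  using assms(2,3)
proof (induction F rule: finite_induct)
  case empty
  then show ?case using lin_zero[OF assms(1)] by simp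
next
  case (insert x F)
  have "T (\<lambda>s. \<Sum>t\<in>insert x F. g t s) = T (\<lambda>s. g x s + (\<Sum>t\<in>F. g t s))"
    using insert by simp
  also have "\<dots> = (\<lambda>s. T (g x) s + T (\<lambda>s. \<Sum>t\<in>F. g t s) s)"
    by (rule linD(1)[OF assms(1)]) (use insert l2_sum in auto)
  finally show ?case using insert by simp
qed

lemma finsupp_delta:
  assumes "finite F" "\<And>t. t \<notin> F \<Longrightarrow> u t = 0"
  shows "u = (\<lambda>s. \<Sum>t\<in>F. u t * delta t s)"
proof (rule ext)
  fix s
  show "u s = (\<Sum>t\<in>F. u t * delta t s)"
  proof (cases "s \<in> F")
    case True
    have "(\<Sum>t\<in>F. u t * delta t s) = (\<Sum>t\<in>{s}. u t * delta t s)"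
      by (rule sum.mono_neutral_right) (use True assms in \<open>auto simp: delta_def\<close>)
    then show ?thesis by (simp add: delta_def)
  next
    case False
    then show ?thesis using assms by (auto simp: delta_def intro!: sum.neutral)
  qed
qed

(* The adjoint of a bounded operator, defined through its matrix: (T^* w)(t) = <w, T delta_t>.
   It is adjoint on finitely supported vectors by linearity, bounded by the same constant,
   and then adjoint on all of l^2 by density. *)
definition adj :: "'a lop \<Rightarrow> 'a lop" where
  "adj T w = (\<lambda>t. l2inner w (T (delta t)))"

lemma adj_finsupp:
  assumes T: "bounded_op T C" and w: "w \<in> l2" and F: "finite F" "\<And>t. t \<notin> F \<Longrightarrow> u t = 0"
  shows "l2inner (T u) w = l2inner u (adj T w)"
proof -
  have dl: "\<And>t. (\<lambda>s. u t * delta t s) \<in> l2" by (rule l2_scale[OF delta_l2, THEN conjunct1])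
  have Td: "\<And>t. T (delta t) \<in> l2" using op_norm_leD(1)[OF bounded_opD(2)[OF T] delta_l2] .
  have "T u = T (\<lambda>s. \<Sum>t\<in>F. u t * delta t s)" using finsupp_delta[OF F] by simp
  also have "\<dots> = (\<lambda>s. \<Sum>t\<in>F. T (\<lambda>s. u t * delta t s) s)"
    by (rule lin_sum[OF bounded_opD(1)[OF T] F(1)]) (use dl in auto)
  also have "\<dots> = (\<lambda>s. \<Sum>t\<in>F. u t * T (delta t) s)"
    using linD(2)[OF bounded_opD(1)[OF T] delta_l2 delta_l2] by simp
  finally have Tu: "T u = (\<lambda>s. \<Sum>t\<in>F. u t * T (delta t) s)" .
  have "l2inner (T u) w = (\<Sum>t\<in>F. l2inner (\<lambda>s. u t * T (delta t) s) w)"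
    unfolding Tu by (rule inner_sum_left[OF F(1) _ w]) (use l2_scale[OF Td] in auto)
  also have "\<dots> = (\<Sum>t\<in>F. u t * l2inner (T (delta t)) w)"
    by (simp add: inner_scale_left)
  also have "\<dots> = (\<Sum>t\<in>F. u t * cnj (adj T w t))"
    by (simp add: adj_def inner_cnj[of w])
  also have "\<dots> = l2inner u (adj T w)"
    using inner_finsupp[OF F] by simp
  finally show ?thesis .
qed

lemma adj_l2:
  assumes T: "bounded_op T C" and w: "w \<in> l2"
  shows "adj T w \<in> l2 \<and> l2norm (adj T w) \<le> C * l2norm w"
proof (rule l2I)
  show "0 \<le> C * l2norm w" using bounded_opD(3)[OF T] by simp
  fix F :: "'a set" assume F: "finite F"
  define z where "z = Proj F (adj T w)"
  define S where "S = (\<Sum>t\<in>F. (cmod (adj T w t))\<^sup>2)"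
  have S0: "0 \<le> S" unfolding S_def by (rule sum_nonneg) simp
  have zs: "\<And>t. t \<notin> F \<Longrightarrow> z t = 0" unfolding z_def Proj_def by simp
  have zl2: "z \<in> l2" using l2_finsupp(1)[OF F zs] .
  have zn: "(l2norm z)\<^sup>2 = S"
    using l2_finsupp(2)[OF F zs] unfolding S_def z_def Proj_def by simp
  have "l2inner z (adj T w) = (\<Sum>t\<in>F. z t * cnj (adj T w t))" using inner_finsupp[OF F zs] .
  also have "\<dots> = (\<Sum>t\<in>F. complex_of_real ((cmod (adj T w t))\<^sup>2))"
    unfolding z_def Proj_def by (intro sum.cong) (auto simp: complex_norm_square[symmetric])
  also have "\<dots> = complex_of_real S" unfolding S_def by simp
  finally have e1: "l2inner z (adj T w) = complex_of_real S" .
  have "S = cmod (l2inner (T z) w)" using adj_finsupp[OF T w F zs] e1 S0 by simp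
  also have "\<dots> \<le> l2norm (T z) * l2norm w" by (rule inner_bound[OF op_norm_leD(1)[OF bounded_opD(2)[OF T] zl2] w])
  also have "\<dots> \<le> C * l2norm z * l2norm w"
    by (rule mult_right_mono) (use op_norm_leD(2)[OF bounded_opD(2)[OF T] zl2] in auto)
  finally have Sle: "S \<le> C * l2norm w * sqrt S"
    using zn by (metis l2norm_ge0 mult.commute mult.left_commute real_sqrt_unique)
  have "sqrt S \<le> C * l2norm w"
  proof (cases "S = 0")
    case True then show ?thesis using bounded_opD(3)[OF T] by simp
  next
    case False
    then have p: "0 < sqrt S" using S0 by simp
    have "sqrt S * sqrt S = S" using S0 by simp
    then have "sqrt S * sqrt S \<le> C * l2norm w * sqrt S" using Sle by simp
    then show ?thesis using p by (rule mult_right_le_imp_le)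
  qed
  then have "(sqrt S)\<^sup>2 \<le> (C * l2norm w)\<^sup>2" by (rule power_mono) (use S0 in simp)
  then show "(\<Sum>t\<in>F. (cmod (adj T w t))\<^sup>2) \<le> (C * l2norm w)\<^sup>2" using S0 unfolding S_def by simp
qed

lemma small_zero:
  assumes "\<And>e. 0 < e \<Longrightarrow> cmod z \<le> K * e" "0 \<le> K"
  shows "z = 0"
proof (rule ccontr)
  assume "z \<noteq> 0"
  then have p: "0 < cmod z" by simp
  define e where "e = cmod z / (2 * (K + 1))"
  have e: "0 < e" unfolding e_def using p assms(2) by simp
  have "K * e < cmod z"
  proof -
    have "K * e = cmod z * (K / (2 * (K + 1)))" unfolding e_def by simp
    also have "\<dots> < cmod z * 1"
      by (rule mult_strict_left_mono) (use p assms(2) in \<open>auto simp: field_simps\<close>)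
    finally show ?thesis by simp
  qed
  with assms(1)[OF e] show False by simp
qed

lemma adj_is_adjoint:
  assumes T: "bounded_op T C"
  shows "is_adjoint T (adj T)"
  unfolding is_adjoint_def
proof (intro ballI conjI)
  fix u w :: "'a \<Rightarrow> complex" assume u: "u \<in> l2" and w: "w \<in> l2"
  show Tu: "T u \<in> l2" using op_norm_leD(1)[OF bounded_opD(2)[OF T] u] .
  show Aw: "adj T w \<in> l2" using adj_l2[OF T w] by blast
  have C0: "0 \<le> C" using bounded_opD(3)[OF T] .
  have small: "cmod (l2inner (T u) w - l2inner u (adj T w)) \<le> 2 * C * l2norm w * e"
    if e: "0 < e" for e
  proof -
    obtain F uF r where F: "finite F" "\<And>t. t \<notin> F \<Longrightarrow> uF t = 0" and uFl: "uF \<in> l2"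
      and rl: "r \<in> l2" and rn: "l2norm r \<le> e" and ud: "u = (\<lambda>t. uF t + r t)"
      using l2_split[OF u e] by blast
    have TuF: "T uF \<in> l2" and Tr: "T r \<in> l2" using op_norm_leD(1)[OF bounded_opD(2)[OF T]] uFl rl by auto
    have "T u = (\<lambda>t. T uF t + T r t)" using linD(1)[OF bounded_opD(1)[OF T] uFl rl] ud by simp
    then have "l2inner (T u) w - l2inner u (adj T w) =
        (l2inner (T uF) w - l2inner uF (adj T w)) + (l2inner (T r) w - l2inner r (adj T w))"
      using inner_add_left[OF TuF Tr w] inner_add_left[OF uFl rl Aw] ud by simp
    also have "l2inner (T uF) w - l2inner uF (adj T w) = 0" using adj_finsupp[OF T w F] by simp
    finally have "cmod (l2inner (T u) w - l2inner u (adj T w)) \<le>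
        cmod (l2inner (T r) w) + cmod (l2inner r (adj T w))"
      by (simp add: norm_triangle_ineq4)
    also have "\<dots> \<le> l2norm (T r) * l2norm w + l2norm r * l2norm (adj T w)"
      by (intro add_mono inner_bound Tr rl w Aw)
    also have "\<dots> \<le> (C * e) * l2norm w + e * (C * l2norm w)"
    proof (intro add_mono mult_mono)
      show "l2norm (T r) \<le> C * e"
        using op_norm_leD(2)[OF bounded_opD(2)[OF T] rl] rn C0 by (meson mult_left_mono order_trans)
    qed (use rn adj_l2[OF T w] C0 e in auto)
    finally show ?thesis by (simp add: algebra_simps)
  qed
  have "l2inner (T u) w - l2inner u (adj T w) = 0"
    by (rule small_zero[where K="2 * C * l2norm w"]) (use small C0 in \<open>auto simp: mult.commute\<close>)
  then show "l2inner (T u) w = l2inner u (adj T w)" by simp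
qed

lemma adj_unique:
  assumes "is_adjoint T X" "w \<in> l2"
  shows "X w = adj T w"
proof (rule ext)
  fix t
  have "l2inner (T (delta t)) w = l2inner (delta t) (X w)"
    using assms unfolding is_adjoint_def by auto
  then have "cnj (l2inner w (T (delta t))) = cnj (X w t)"
    by (simp add: inner_delta_left inner_cnj[of w])
  then show "X w t = adj T w t" unfolding adj_def by simp
qed

lemma adj_lin:
  assumes T: "bounded_op T C"
  shows "lin (adj T)"
  unfolding lin_def
proof (intro conjI ballI allI)
  have Td: "\<And>t. T (delta t) \<in> l2" using op_norm_leD(1)[OF bounded_opD(2)[OF T] delta_l2] .
  fix u w :: "'a \<Rightarrow> complex" assume "u \<in> l2" "w \<in> l2"
  then show "adj T (\<lambda>t. u t + w t) = (\<lambda>t. adj T u t + adj T w t)"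
    unfolding adj_def using inner_add_left Td by blast
next
  fix u :: "'a \<Rightarrow> complex" and c assume "u \<in> l2"
  show "adj T (\<lambda>t. c * u t) = (\<lambda>t. c * adj T u t)"
    unfolding adj_def by (simp add: inner_scale_left)
qed

lemma adj_bounded:
  assumes T: "bounded_op T C" shows "bounded_op (adj T) C"
  unfolding bounded_op_def op_norm_le_def using adj_lin[OF T] adj_l2[OF T] bounded_opD(3)[OF T] by auto

lemma strong_convD:
  assumes "strong_conv T S" "u \<in> l2"
  shows "S u \<in> l2" "T n u \<in> l2" "(\<lambda>n. l2norm (\<lambda>t. T n u t - S u t)) \<longlonglongrightarrow> 0"
  using assms unfolding strong_conv_def by auto

lemma strong_conv_cong:
  assumes "strong_conv T S" "\<And>n u. u \<in> l2 \<Longrightarrow> T' n u = T n u" "\<And>u. u \<in> l2 \<Longrightarrow> S' u = S u"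
  shows "strong_conv T' S'"
  using assms unfolding strong_conv_def by simp

lemma strong_conv_subseq:
  assumes "strong_conv T S" "strict_mono r"
  shows "strong_conv (\<lambda>n. T (r n)) S"
  using assms unfolding strong_conv_def
  by (auto intro: LIMSEQ_subseq_LIMSEQ[unfolded o_def])

lemma lim_le0:
  fixes a b :: "nat \<Rightarrow> real"
  assumes "a \<longlonglongrightarrow> 0" "b \<longlonglongrightarrow> 0" "\<And>n. x \<le> a n + b n"
  shows "x \<le> 0"
proof -
  have "(\<lambda>n. a n + b n) \<longlonglongrightarrow> 0" using tendsto_add[OF assms(1,2)] by simp
  then show ?thesis using assms(3) by (intro tendsto_lowerbound[where F=sequentially]) auto
qed

lemma strong_conv_unique:
  assumes "strong_conv T S" "strong_conv T S'" "u \<in> l2"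
  shows "S u = S' u"
proof -
  have a: "S u \<in> l2" "S' u \<in> l2" using strong_convD[OF assms(1,3)] strong_convD[OF assms(2,3)] by auto
  have "l2norm (\<lambda>t. S u t - S' u t) \<le> 0"
  proof (rule lim_le0[OF strong_convD(3)[OF assms(1,3)] strong_convD(3)[OF assms(2,3)]])
    fix n
    have "(\<lambda>t. S u t - S' u t) = (\<lambda>t. (T n u t - S' u t) - (T n u t - S u t))" by simp
    moreover have "l2norm (\<lambda>t. (T n u t - S' u t) - (T n u t - S u t)) \<le> l2norm (\<lambda>t. T n u t - S' u t) + l2norm (\<lambda>t. T n u t - S u t)"
      by (rule l2_diff[THEN conjunct2]) (use l2_diff strong_convD(2)[OF assms(1,3)] a in auto)
    ultimately show "l2norm (\<lambda>t. S u t - S' u t) \<le> l2norm (\<lambda>t. T n u t - S u t) + l2norm (\<lambda>t. T n u t - S' u t)"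
      by simp
  qed
  then have "l2norm (\<lambda>t. S u t - S' u t) = 0" using l2norm_ge0[of "\<lambda>t. S u t - S' u t"] by linarith
  then have "(\<lambda>t. S u t - S' u t) = (\<lambda>t. 0)" using l2norm_eq0 l2_diff[OF a] by blast
  then show ?thesis by (metis (no_types) eq_iff_diff_eq_0 ext)
qed

lemma inner_conv_left:
  assumes "strong_conv T S" "u \<in> l2" "w \<in> l2"
  shows "(\<lambda>n. l2inner (T n u) w) \<longlonglongrightarrow> l2inner (S u) w"
proof -
  note d = strong_convD[OF assms(1,2)]
  have "(\<lambda>n. cmod (l2inner (T n u) w - l2inner (S u) w)) \<longlonglongrightarrow> 0"
  proof (rule tendsto_sandwich[where f="\<lambda>n. 0" and h="\<lambda>n. l2norm (\<lambda>t. T n u t - S u t) * l2norm w"])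
    show "\<forall>\<^sub>F n in sequentially. cmod (l2inner (T n u) w - l2inner (S u) w) \<le> l2norm (\<lambda>t. T n u t - S u t) * l2norm w"
    proof (intro always_eventually allI)
      fix n
      have "l2inner (T n u) w - l2inner (S u) w = l2inner (\<lambda>t. T n u t - S u t) w"
        using inner_diff_left[OF d(2) d(1) assms(3)] by simp
      then show "cmod (l2inner (T n u) w - l2inner (S u) w) \<le> l2norm (\<lambda>t. T n u t - S u t) * l2norm w"
        using inner_bound[OF l2_diff[OF d(2) d(1), THEN conjunct1] assms(3)] by simp
    qed
    show "(\<lambda>n. l2norm (\<lambda>t. T n u t - S u t) * l2norm w) \<longlonglongrightarrow> 0"
      using tendsto_mult_left_zero[OF d(3)] by simp
  qed auto
  then show ?thesis by (simp add: LIM_zero_iff tendsto_norm_zero_iff)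
qed

lemma adjoint_limit:
  assumes "strong_conv T S" "strong_conv T' S'" "\<And>n. is_adjoint (T n) (T' n)"
  shows "is_adjoint S S'"
  unfolding is_adjoint_def
proof (intro ballI conjI)
  fix u w :: "'a \<Rightarrow> complex" assume u: "u \<in> l2" and w: "w \<in> l2"
  show "S u \<in> l2" using strong_convD[OF assms(1) u] by simp
  show "S' w \<in> l2" using strong_convD[OF assms(2) w] by simp
  have l1: "(\<lambda>n. l2inner (T n u) w) \<longlonglongrightarrow> l2inner (S u) w" by (rule inner_conv_left[OF assms(1) u w])
  have "(\<lambda>n. l2inner (T' n w) u) \<longlonglongrightarrow> l2inner (S' w) u" by (rule inner_conv_left[OF assms(2) w u])
  then have "(\<lambda>n. cnj (l2inner (T' n w) u)) \<longlonglongrightarrow> cnj (l2inner (S' w) u)" by (rule tendsto_cnj)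
  then have l2: "(\<lambda>n. l2inner u (T' n w)) \<longlonglongrightarrow> l2inner u (S' w)" by (simp add: inner_cnj[of u])
  have "\<And>n. l2inner (T n u) w = l2inner u (T' n w)" using assms(3) u w unfolding is_adjoint_def by blast
  then show "l2inner (S u) w = l2inner u (S' w)" using l1 l2 LIMSEQ_unique by simp
qed
abbreviation shift_conj :: "'g::group_add \<Rightarrow> 'g lop \<Rightarrow> 'g lop" where
  "shift_conj s T \<equiv> Rsh (- s) \<circ> T \<circ> Rsh s"

lemma inner_Rsh_right: "l2inner x (Rsh s y) = l2inner (Rsh (- s) x) y"
  using inner_Rsh[of "- s" x y] by simp

lemma conj_adjoint:
  fixes T X :: "('g::group_add) lop"
  assumes "is_adjoint T X"
  shows "is_adjoint (shift_conj s T) (shift_conj s X)"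
  unfolding is_adjoint_def
proof (intro ballI conjI)
  fix u w :: "'g \<Rightarrow> complex" assume u: "u \<in> l2" and w: "w \<in> l2"
  have su: "Rsh s u \<in> l2" and sw: "Rsh s w \<in> l2" using Rsh_l2 u w by auto
  show "(shift_conj s T) u \<in> l2" using assms su unfolding is_adjoint_def by (auto intro: Rsh_l2)
  show "(shift_conj s X) w \<in> l2" using assms sw unfolding is_adjoint_def by (auto intro: Rsh_l2)
  have "l2inner ((shift_conj s T) u) w = l2inner (T (Rsh s u)) (Rsh s w)"
    by (simp add: inner_Rsh)
  also have "\<dots> = l2inner (Rsh s u) (X (Rsh s w))" using assms su sw unfolding is_adjoint_def by blast
  also have "\<dots> = l2inner u ((shift_conj s X) w)" by (simp add: inner_Rsh)
  finally show "l2inner ((shift_conj s T) u) w = l2inner u ((shift_conj s X) w)" .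
qed

lemma Rsh_add: "Rsh s (\<lambda>t. u t + w t) = (\<lambda>t. Rsh s u t + Rsh s w t)"
  by (simp add: Rsh_def)
lemma Rsh_scale: "Rsh s (\<lambda>t. c * u t) = (\<lambda>t. c * Rsh s u t)"
  by (simp add: Rsh_def)

lemma conj_bounded:
  fixes T :: "('g::group_add) lop"
  assumes "bounded_op T C"
  shows "bounded_op (shift_conj s T) C"
  unfolding bounded_op_def lin_def op_norm_le_def
proof (intro conjI ballI allI)
  note L = bounded_opD(1)[OF assms] and B = bounded_opD(2)[OF assms]
  show "0 \<le> C" using bounded_opD(3)[OF assms] .
  fix u :: "'g \<Rightarrow> complex" assume u: "u \<in> l2"
  have su: "Rsh s u \<in> l2" using Rsh_l2 u by auto
  show "(shift_conj s T) u \<in> l2" using op_norm_leD(1)[OF B su] by (simp add: Rsh_l2)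
  show "l2norm ((shift_conj s T) u) \<le> C * l2norm u"
    using op_norm_leD(2)[OF B su] op_norm_leD(1)[OF B su] Rsh_l2(2)[OF u] by (simp add: Rsh_l2)
  fix c
  show "(shift_conj s T) (\<lambda>t. c * u t) = (\<lambda>t. c * (shift_conj s T) u t)"
    using linD(2)[OF L su su] by (simp add: Rsh_scale)
next
  note L = bounded_opD(1)[OF assms]
  fix u w :: "'g \<Rightarrow> complex" assume u: "u \<in> l2" and w: "w \<in> l2"
  have su: "Rsh s u \<in> l2" "Rsh s w \<in> l2" using Rsh_l2 u w by auto
  show "(shift_conj s T) (\<lambda>t. u t + w t) = (\<lambda>t. (shift_conj s T) u t + (shift_conj s T) w t)"
    using linD(1)[OF L su] by (simp add: Rsh_add)
qed

lemma tendsto0_eventually_less: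
  fixes f :: "nat \<Rightarrow> real"
  assumes "f \<longlonglongrightarrow> 0" "0 < e"
  shows "\<exists>N. \<forall>n\<ge>N. f n < e"
  using order_tendstoD(2)[OF assms] unfolding eventually_sequentially by auto

definition scauchy :: "(nat \<Rightarrow> 'a lop) \<Rightarrow> bool" where
  "scauchy T \<longleftrightarrow> (\<forall>u\<in>l2. \<forall>e>0. \<exists>N. \<forall>m\<ge>N. \<forall>n\<ge>N. l2norm (\<lambda>t. T m u t - T n u t) < e)"

lemma scauchyD:
  assumes "scauchy T" "u \<in> l2" "0 < e"
  shows "\<exists>N. \<forall>m\<ge>N. \<forall>n\<ge>N. l2norm (\<lambda>t. T m u t - T n u t) < e"
  using assms unfolding scauchy_def by blast

lemma scauchy_subseq:
  assumes "scauchy T" "strict_mono r"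
  shows "scauchy (\<lambda>n. T (r n))"
  unfolding scauchy_def
proof (intro ballI allI impI)
  fix u :: "'a \<Rightarrow> complex" and e :: real assume "u \<in> l2" "0 < e"
  then obtain N where N: "\<And>m n. N \<le> m \<Longrightarrow> N \<le> n \<Longrightarrow> l2norm (\<lambda>t. T m u t - T n u t) < e"
    using scauchyD[OF assms(1)] by blast
  show "\<exists>N. \<forall>m\<ge>N. \<forall>n\<ge>N. l2norm (\<lambda>t. T (r m) u t - T (r n) u t) < e"
    using N seq_suble[OF assms(2)] order_trans by blast
qed

lemma scauchy_shift:
  assumes "scauchy (\<lambda>n. T (k + n))"
  shows "scauchy T"
  unfolding scauchy_def
proof (intro ballI allI impI)
  fix u :: "'a \<Rightarrow> complex" and e :: real assume "u \<in> l2" "0 < e"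
  then obtain N where N: "\<And>m n. N \<le> m \<Longrightarrow> N \<le> n \<Longrightarrow> l2norm (\<lambda>t. T (k + m) u t - T (k + n) u t) < e"
    using scauchyD[OF assms(1)] by blast
  show "\<exists>N. \<forall>m\<ge>N. \<forall>n\<ge>N. l2norm (\<lambda>t. T m u t - T n u t) < e"
  proof (intro exI[of _ "k + N"] allI impI)
    fix m n assume "k + N \<le> m" "k + N \<le> n"
    then show "l2norm (\<lambda>t. T m u t - T n u t) < e" using N[of "m - k" "n - k"] by simp
  qed
qed

lemma strong_conv_scauchy:
  assumes "strong_conv T S"
  shows "scauchy T"
  unfolding scauchy_def
proof (intro ballI allI impI)
  fix u :: "'a \<Rightarrow> complex" and e :: real assume u: "u \<in> l2" and e: "0 < e"
  note d = strong_convD[OF assms u]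
  obtain N where N: "\<And>n. N \<le> n \<Longrightarrow> l2norm (\<lambda>t. T n u t - S u t) < e / 2"
    using tendsto0_eventually_less[OF d(3), of "e / 2"] e by auto
  show "\<exists>N. \<forall>m\<ge>N. \<forall>n\<ge>N. l2norm (\<lambda>t. T m u t - T n u t) < e"
  proof (intro exI[of _ N] allI impI)
    fix m n assume m: "N \<le> m" and n: "N \<le> n"
    have "l2norm (\<lambda>t. (T m u t - S u t) - (T n u t - S u t)) \<le> l2norm (\<lambda>t. T m u t - S u t) + l2norm (\<lambda>t. T n u t - S u t)"
      using l2_diff[OF l2_diff[OF d(2) d(1), THEN conjunct1] l2_diff[OF d(2) d(1), THEN conjunct1]] by blast
    then show "l2norm (\<lambda>t. T m u t - T n u t) < e" using N[OF m] N[OF n] by simp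
  qed
qed
lemma scauchy_pointwise:
  assumes T: "\<And>n u. u \<in> l2 \<Longrightarrow> T n u \<in> l2" and sc: "scauchy T" and u: "u \<in> l2"
  shows "(\<lambda>n. T n u t) \<longlonglongrightarrow> lim (\<lambda>n. T n u t)"
proof -
  have "Cauchy (\<lambda>n. T n u t)"
  proof (rule metric_CauchyI)
    fix e :: real assume "0 < e"
    then obtain N where N: "\<And>m n. N \<le> m \<Longrightarrow> N \<le> n \<Longrightarrow> l2norm (\<lambda>t. T m u t - T n u t) < e"
      using scauchyD[OF sc u] by blast
    have "dist (T m u t) (T n u t) < e" if "N \<le> m" "N \<le> n" for m n
      using l2_point[OF l2_diff[OF T[OF u, of m] T[OF u, of n], THEN conjunct1], of t] N[OF that]
      by (simp add: dist_norm)
    then show "\<exists>M. \<forall>m\<ge>M. \<forall>n\<ge>M. dist (T m u t) (T n u t) < e" by blast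
  qed
  then show ?thesis by (simp add: Cauchy_convergent_iff convergent_LIMSEQ_iff)
qed

lemma scauchy_tail:
  assumes T: "\<And>n u. u \<in> l2 \<Longrightarrow> T n u \<in> l2" and sc: "scauchy T" and u: "u \<in> l2"
    and e: "0 < e"
  shows "\<exists>N. \<forall>n\<ge>N. (\<lambda>t. T n u t - lim (\<lambda>n. T n u t)) \<in> l2 \<and>
      l2norm (\<lambda>t. T n u t - lim (\<lambda>n. T n u t)) \<le> e"
proof -
  obtain N where N: "\<And>m n. N \<le> m \<Longrightarrow> N \<le> n \<Longrightarrow> l2norm (\<lambda>t. T m u t - T n u t) < e"
    using scauchyD[OF sc u e] by blast
  have "(\<lambda>t. T n u t - lim (\<lambda>n. T n u t)) \<in> l2 \<and> l2norm (\<lambda>t. T n u t - lim (\<lambda>n. T n u t)) \<le> e"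
    if n: "N \<le> n" for n
  proof (rule l2I)
    fix G :: "'a set" assume G: "finite G"
    have lim: "(\<lambda>k. \<Sum>t\<in>G. (cmod (T n u t - T k u t))\<^sup>2) \<longlonglongrightarrow>
        (\<Sum>t\<in>G. (cmod (T n u t - lim (\<lambda>n. T n u t)))\<^sup>2)"
      by (intro tendsto_sum tendsto_intros scauchy_pointwise[OF T sc u])
    show "(\<Sum>t\<in>G. (cmod (T n u t - lim (\<lambda>n. T n u t)))\<^sup>2) \<le> e\<^sup>2"
    proof (rule LIMSEQ_le_const2[OF lim], intro exI[of _ N] allI impI)
      fix k assume k: "N \<le> k"
      have "(\<Sum>t\<in>G. (cmod (T n u t - T k u t))\<^sup>2) \<le> (l2norm (\<lambda>t. T n u t - T k u t))\<^sup>2"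
        by (rule l2_finsum_le[OF l2_diff[OF T[OF u] T[OF u], THEN conjunct1] G])
      also have "\<dots> \<le> e\<^sup>2" using N[OF n k] by (intro power_mono) auto
      finally show "(\<Sum>t\<in>G. (cmod (T n u t - T k u t))\<^sup>2) \<le> e\<^sup>2" .
    qed
  qed (use e in simp)
  then show ?thesis by blast
qed

lemma scauchy_lim:
  assumes T: "\<And>n u. u \<in> l2 \<Longrightarrow> T n u \<in> l2" and sc: "scauchy T"
  shows "strong_conv T (\<lambda>u t. lim (\<lambda>n. T n u t))"
  unfolding strong_conv_def
proof (intro ballI conjI allI)
  fix u :: "'a \<Rightarrow> complex" assume u: "u \<in> l2"
  obtain N where N: "(\<lambda>t. T N u t - lim (\<lambda>n. T n u t)) \<in> l2"
    using scauchy_tail[OF T sc u zero_less_one] by blast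
  have "(\<lambda>t. T N u t - (T N u t - lim (\<lambda>n. T n u t))) \<in> l2"
    using l2_diff[OF T[OF u] N] by blast
  then show "(\<lambda>t. lim (\<lambda>n. T n u t)) \<in> l2" by simp
  show "(\<lambda>n. l2norm (\<lambda>t. T n u t - lim (\<lambda>n. T n u t))) \<longlonglongrightarrow> 0"
  proof (rule LIMSEQ_I)
    fix e :: real assume e: "0 < e"
    obtain N where N: "\<forall>n\<ge>N. l2norm (\<lambda>t. T n u t - lim (\<lambda>n. T n u t)) \<le> e / 2"
      using scauchy_tail[OF T sc u half_gt_zero[OF e]] by blast
    show "\<exists>no. \<forall>n\<ge>no. norm (l2norm (\<lambda>t. T n u t - lim (\<lambda>n. T n u t)) - 0) < e"
    proof (intro exI allI impI)
      fix n assume "N \<le> n"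
      then show "norm (l2norm (\<lambda>t. T n u t - lim (\<lambda>n. T n u t)) - 0) < e" using N e by fastforce
    qed
  qed
next
  fix u :: "'a \<Rightarrow> complex" and n assume "u \<in> l2"
  then show "T n u \<in> l2" using T by simp
qed

lemma scauchy_add:
  assumes "scauchy S" "scauchy T" "\<And>n u. u \<in> l2 \<Longrightarrow> S n u \<in> l2" "\<And>n u. u \<in> l2 \<Longrightarrow> T n u \<in> l2"
  shows "scauchy (\<lambda>n u t. S n u t + T n u t)"
  unfolding scauchy_def
proof (intro ballI allI impI)
  fix u :: "'a \<Rightarrow> complex" and e :: real assume u: "u \<in> l2" and e: "0 < e"
  obtain N1 where N1: "\<And>m n. N1 \<le> m \<Longrightarrow> N1 \<le> n \<Longrightarrow> l2norm (\<lambda>t. S m u t - S n u t) < e / 2"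
    using scauchyD[OF assms(1) u, of "e / 2"] e by auto
  obtain N2 where N2: "\<And>m n. N2 \<le> m \<Longrightarrow> N2 \<le> n \<Longrightarrow> l2norm (\<lambda>t. T m u t - T n u t) < e / 2"
    using scauchyD[OF assms(2) u, of "e / 2"] e by auto
  show "\<exists>N. \<forall>m\<ge>N. \<forall>n\<ge>N. l2norm (\<lambda>t. (S m u t + T m u t) - (S n u t + T n u t)) < e"
  proof (intro exI[of _ "max N1 N2"] allI impI)
    fix m n assume m: "max N1 N2 \<le> m" and n: "max N1 N2 \<le> n"
    have a: "(\<lambda>t. S m u t - S n u t) \<in> l2" "(\<lambda>t. T m u t - T n u t) \<in> l2"
      using l2_diff assms(3,4) u by blast+
    have "(\<lambda>t. (S m u t + T m u t) - (S n u t + T n u t)) = (\<lambda>t. (S m u t - S n u t) + (T m u t - T n u t))"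
      by (simp add: algebra_simps)
    then have "l2norm (\<lambda>t. (S m u t + T m u t) - (S n u t + T n u t)) \<le> l2norm (\<lambda>t. S m u t - S n u t) + l2norm (\<lambda>t. T m u t - T n u t)"
      using l2_add[OF a] by simp
    then show "l2norm (\<lambda>t. (S m u t + T m u t) - (S n u t + T n u t)) < e" using N1[of m n] N2[of m n] m n by simp
  qed
qed

lemma scauchy_scale:
  assumes "scauchy S" "\<And>n u. u \<in> l2 \<Longrightarrow> S n u \<in> l2"
  shows "scauchy (\<lambda>n u t. c * S n u t)"
  unfolding scauchy_def
proof (intro ballI allI impI)
  fix u :: "'a \<Rightarrow> complex" and e :: real assume u: "u \<in> l2" and e: "0 < e"
  obtain N where N: "\<And>m n. N \<le> m \<Longrightarrow> N \<le> n \<Longrightarrow> l2norm (\<lambda>t. S m u t - S n u t) < e / (cmod c + 1)"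
  proof -
    have "0 < cmod c + 1" by (simp add: add_nonneg_pos)
    then have "0 < e / (cmod c + 1)" using e by simp
    then show ?thesis using that scauchyD[OF assms(1) u] by blast
  qed
  show "\<exists>N. \<forall>m\<ge>N. \<forall>n\<ge>N. l2norm (\<lambda>t. c * S m u t - c * S n u t) < e"
  proof (intro exI[of _ N] allI impI)
    fix m n assume m: "N \<le> m" and n: "N \<le> n"
    have a: "(\<lambda>t. S m u t - S n u t) \<in> l2" using l2_diff assms(2) u by blast
    have "l2norm (\<lambda>t. c * S m u t - c * S n u t) = l2norm (\<lambda>t. c * (S m u t - S n u t))"
      by (simp add: algebra_simps)
    also have "\<dots> \<le> cmod c * l2norm (\<lambda>t. S m u t - S n u t)" using l2_scale[OF a] by simp
    also have "\<dots> \<le> cmod c * (e / (cmod c + 1))" using N[OF m n] by (intro mult_left_mono) auto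
    also have "\<dots> < e"
    proof -
      have p: "0 < cmod c + 1" by (simp add: add_nonneg_pos)
      have "cmod c * (e / (cmod c + 1)) = e * (cmod c / (cmod c + 1))" by simp
      also have "\<dots> < e * 1" using e p by (intro mult_strict_left_mono) (auto simp: field_simps)
      finally show ?thesis by simp
    qed
    finally show "l2norm (\<lambda>t. c * S m u t - c * S n u t) < e" .
  qed
qed

(* The product of uniformly bounded strongly Cauchy sequences is strongly Cauchy: compare
   S_m T_m u and S_n T_n u through S_m x and S_n x for a fixed x = T_N u. *)
lemma scauchy_comp:
  assumes "scauchy S" "scauchy T" "\<And>n. bounded_op (S n) C" "\<And>n. bounded_op (T n) D"
  shows "scauchy (\<lambda>n. S n \<circ> T n)"
  unfolding scauchy_def
proof (intro ballI allI impI)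
  fix u :: "'a \<Rightarrow> complex" and e :: real assume u: "u \<in> l2" and e: "0 < e"
  have C0: "0 \<le> C" using bounded_opD(3)[OF assms(3)] .
  define \<delta> where "\<delta> = e / (3 * (C + 1))"
  have d: "0 < \<delta>" unfolding \<delta>_def using e C0 by simp
  have Cd: "C * \<delta> \<le> e / 3"
  proof -
    have "C * \<delta> = e / 3 * (C / (C + 1))" unfolding \<delta>_def using C0 by (simp add: field_simps)
    also have "\<dots> \<le> e / 3 * 1" using e C0 by (intro mult_left_mono) auto
    finally show ?thesis by simp
  qed
  have Tl: "\<And>n. T n u \<in> l2" using op_norm_leD(1)[OF bounded_opD(2)[OF assms(4)] u] .
  obtain N1 where N1: "\<And>m n. N1 \<le> m \<Longrightarrow> N1 \<le> n \<Longrightarrow> l2norm (\<lambda>t. T m u t - T n u t) < \<delta>"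
    using scauchyD[OF assms(2) u d] by auto
  define x where "x = T N1 u"
  have xl: "x \<in> l2" unfolding x_def using Tl .
  obtain N2 where N2: "\<And>m n. N2 \<le> m \<Longrightarrow> N2 \<le> n \<Longrightarrow> l2norm (\<lambda>t. S m x t - S n x t) < e / 3"
    using scauchyD[OF assms(1) xl, of "e / 3"] e by auto
  have close: "l2norm (\<lambda>t. S k (T j u) t - S k x t) \<le> C * \<delta>" if "N1 \<le> j" for j k
    using order_trans[OF bounded_op_diff_norm(2)[OF assms(3) Tl xl] mult_left_mono[OF _ C0]]
      N1[OF that order_refl] unfolding x_def by fastforce
  show "\<exists>N. \<forall>m\<ge>N. \<forall>n\<ge>N. l2norm (\<lambda>t. (S m \<circ> T m) u t - (S n \<circ> T n) u t) < e"
  proof (intro exI[of _ "max N1 N2"] allI impI)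
    fix m n assume m: "max N1 N2 \<le> m" and n: "max N1 N2 \<le> n"
    have Sx: "S k x \<in> l2" for k using op_norm_leD(1)[OF bounded_opD(2)[OF assms(3)] xl] .
    have eq: "(\<lambda>t. (S m \<circ> T m) u t - (S n \<circ> T n) u t) =
      (\<lambda>t. (S m (T m u) t - S m x t) + (S m x t - S n x t) + (S n x t - S n (T n u) t))" by auto
    have "l2norm (\<lambda>t. (S m \<circ> T m) u t - (S n \<circ> T n) u t) \<le>
      l2norm (\<lambda>t. S m (T m u) t - S m x t) + l2norm (\<lambda>t. S m x t - S n x t)
      + l2norm (\<lambda>t. S n x t - S n (T n u) t)"
      unfolding eq by (rule l2_triangle3[OF bounded_op_diff_norm(1)[OF assms(3) Tl xl]
          l2_diff[OF Sx Sx, THEN conjunct1] bounded_op_diff_norm(1)[OF assms(3) xl Tl]])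
    also have "\<dots> < e"
      using close[of m m] close[of n n] l2norm_swap[of "S n x" "S n (T n u)"] N2[of m n] m n Cd by simp
    finally show "l2norm (\<lambda>t. (S m \<circ> T m) u t - (S n \<circ> T n) u t) < e" .
  qed
qed

lemma approx_scauchy:
  assumes S: "\<And>i. scauchy (S i)" and Tl: "\<And>n u. u \<in> l2 \<Longrightarrow> T n u \<in> l2"
    and Sl: "\<And>i n u. u \<in> l2 \<Longrightarrow> S i n u \<in> l2"
    and appr: "\<And>i n u. u \<in> l2 \<Longrightarrow> l2norm (\<lambda>t. T n u t - S i n u t) \<le> l2norm u / (Suc i)"
  shows "scauchy T"
  unfolding scauchy_def
proof (intro ballI allI impI)
  fix u :: "'a \<Rightarrow> complex" and e :: real assume u: "u \<in> l2" and e: "0 < e"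
  obtain i :: nat where i: "3 * (l2norm u + 1) / e < real i" using reals_Archimedean2 by blast
  have ip: "0 < real (Suc i)" by simp
  have small: "l2norm u / Suc i < e / 3"
  proof -
    have "3 * (l2norm u + 1) < e * real i" using i e by (simp add: field_simps)
    then have "3 * l2norm u < e * real (Suc i)" using e by (simp add: algebra_simps)
    then show ?thesis using ip by (simp add: field_simps)
  qed
  have e3: "0 < e / 3" using e by simp
  obtain N where N: "\<And>m n. N \<le> m \<Longrightarrow> N \<le> n \<Longrightarrow> l2norm (\<lambda>t. S i m u t - S i n u t) < e / 3"
    using scauchyD[OF S[of i] u e3] by blast
  show "\<exists>N. \<forall>m\<ge>N. \<forall>n\<ge>N. l2norm (\<lambda>t. T m u t - T n u t) < e"
  proof (intro exI[of _ N] allI impI)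
    fix m n assume m: "N \<le> m" and n: "N \<le> n"
    have a1: "(\<lambda>t. T m u t - S i m u t) \<in> l2" using l2_diff[OF Tl[OF u] Sl[OF u]] by blast
    have a2: "(\<lambda>t. S i m u t - S i n u t) \<in> l2" using l2_diff[OF Sl[OF u] Sl[OF u]] by blast
    have a3: "(\<lambda>t. S i n u t - T n u t) \<in> l2" using l2_diff[OF Sl[OF u] Tl[OF u]] by blast
    have n3: "l2norm (\<lambda>t. S i n u t - T n u t) = l2norm (\<lambda>t. T n u t - S i n u t)" by (rule l2norm_swap)
    have eq: "(\<lambda>t. T m u t - T n u t) = (\<lambda>t. (T m u t - S i m u t) + (S i m u t - S i n u t) + (S i n u t - T n u t))"
      by auto
    have "l2norm (\<lambda>t. T m u t - T n u t) \<le> l2norm (\<lambda>t. T m u t - S i m u t) + l2norm (\<lambda>t. S i m u t - S i n u t) + l2norm (\<lambda>t. S i n u t - T n u t)"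
      unfolding eq by (rule l2_triangle3[OF a1 a2 a3])
    also have "\<dots> < e" using appr[OF u, of m i] appr[OF u, of n i] n3 N[OF m n] small by linarith
    finally show "l2norm (\<lambda>t. T m u t - T n u t) < e" .
  qed
qed
lemma strong_conv_by_density:
  assumes Tb: "\<And>n. bounded_op (T n) C" and Lb: "bounded_op L D"
    and fin: "\<And>u F. finite F \<Longrightarrow> (\<And>t. t \<notin> F \<Longrightarrow> u t = 0) \<Longrightarrow>
                (\<lambda>n. l2norm (\<lambda>t. T n u t - L u t)) \<longlonglongrightarrow> 0"
  shows "strong_conv T L"
  unfolding strong_conv_def
proof (intro ballI conjI allI)
  fix u :: "'a \<Rightarrow> complex" assume u: "u \<in> l2"
  show "L u \<in> l2" using op_norm_leD(1)[OF bounded_opD(2)[OF Lb] u] .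
  show "T n u \<in> l2" for n using op_norm_leD(1)[OF bounded_opD(2)[OF Tb] u] .
  have C0: "0 \<le> C" and D0: "0 \<le> D" using bounded_opD(3) Tb Lb by blast+
  show "(\<lambda>n. l2norm (\<lambda>t. T n u t - L u t)) \<longlonglongrightarrow> 0"
  proof (rule LIMSEQ_I)
    fix e :: real assume e: "0 < e"
    define \<delta> where "\<delta> = e / (2 * (C + D + 1))"
    have d: "0 < \<delta>" and dCD: "(C + D) * \<delta> < e / 2"
      unfolding \<delta>_def using e C0 D0 by (auto simp: field_simps)
    obtain F uF r where F: "finite F" "\<And>t. t \<notin> F \<Longrightarrow> uF t = 0" and uFl: "uF \<in> l2"
      and rl: "r \<in> l2" and rn: "l2norm r \<le> \<delta>" and ud: "u = (\<lambda>t. uF t + r t)"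
      using l2_split[OF u d] by blast
    obtain N where N: "\<And>n. N \<le> n \<Longrightarrow> l2norm (\<lambda>t. T n uF t - L uF t) < e / 2"
      using tendsto0_eventually_less[OF fin[where u=uF, OF F] half_gt_zero[OF e]] by auto
    have "l2norm (\<lambda>t. T n u t - L u t) < e" if n: "N \<le> n" for n
    proof -
      have a1: "(\<lambda>t. T n uF t - L uF t) \<in> l2"
        using l2_diff op_norm_leD(1)[OF bounded_opD(2)[OF Tb] uFl] op_norm_leD(1)[OF bounded_opD(2)[OF Lb] uFl] by blast
      have Tr: "T n r \<in> l2" "l2norm (T n r) \<le> C * \<delta>"
        using op_norm_leD(1)[OF bounded_opD(2)[OF Tb] rl]
          order_trans[OF op_norm_leD(2)[OF bounded_opD(2)[OF Tb] rl] mult_left_mono[OF rn C0]] by auto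
      have Lr: "L r \<in> l2" "l2norm (L r) \<le> D * \<delta>"
        using op_norm_leD(1)[OF bounded_opD(2)[OF Lb] rl]
          order_trans[OF op_norm_leD(2)[OF bounded_opD(2)[OF Lb] rl] mult_left_mono[OF rn D0]] by auto
      have a2: "(\<lambda>t. T n r t - L r t) \<in> l2" "l2norm (\<lambda>t. T n r t - L r t) \<le> (C + D) * \<delta>"
        using l2_diff[OF Tr(1) Lr(1)] Tr(2) Lr(2) by (auto simp: algebra_simps)
      have "(\<lambda>t. T n u t - L u t) = (\<lambda>t. (T n uF t - L uF t) + (T n r t - L r t))"
        using linD(1)[OF bounded_opD(1)[OF Tb] uFl rl] linD(1)[OF bounded_opD(1)[OF Lb] uFl rl] ud
        by (simp add: algebra_simps)
      then have "l2norm (\<lambda>t. T n u t - L u t) \<le>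
          l2norm (\<lambda>t. T n uF t - L uF t) + l2norm (\<lambda>t. T n r t - L r t)"
        using l2_add[OF a1 a2(1)] by simp
      then show ?thesis using N[OF n] a2(2) dCD by linarith
    qed
    then show "\<exists>no. \<forall>n\<ge>no. norm (l2norm (\<lambda>t. T n u t - L u t) - 0) < e" by auto
  qed
qed

lemma finsupp_l2norm_tendsto0:
  fixes x :: "nat \<Rightarrow> 'a \<Rightarrow> complex"
  assumes F: "finite F" and supp: "\<And>n t. t \<notin> F \<Longrightarrow> x n t = 0"
    and conv: "\<And>t. (\<lambda>n. x n t) \<longlonglongrightarrow> 0"
  shows "(\<lambda>n. l2norm (x n)) \<longlonglongrightarrow> 0"
proof -
  have "l2norm (x n) = sqrt (\<Sum>t\<in>F. (cmod (x n t))\<^sup>2)" for n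
    using l2_finsupp(2)[OF F, of "x n"] supp by (metis l2norm_ge0 real_sqrt_unique)
  moreover have "(\<lambda>n. sqrt (\<Sum>t\<in>F. (cmod (x n t))\<^sup>2)) \<longlonglongrightarrow> sqrt (\<Sum>t\<in>F. (cmod 0)\<^sup>2)"
    by (intro tendsto_intros conv)
  ultimately show ?thesis by simp
qed

lemma bounded_op_mult:
  assumes M: "\<And>t. cmod (a t) \<le> M"
  shows "bounded_op (mult_op a) M"
proof -
  have M0: "0 \<le> M" using M[of undefined] norm_ge_zero order_trans by blast
  show ?thesis
    unfolding bounded_op_def lin_def op_norm_le_def
  proof (intro conjI ballI allI)
    fix u :: "'a \<Rightarrow> complex" assume u: "u \<in> l2"
    have "mult_op a u \<in> l2 \<and> l2norm (mult_op a u) \<le> M * l2norm u"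
      by (rule l2_dom[OF u M0]) (simp add: mult_op_def norm_mult mult_right_mono M)
    then show "mult_op a u \<in> l2" "l2norm (mult_op a u) \<le> M * l2norm u" by auto
  qed (auto simp: mult_op_def algebra_simps M0)
qed

lemma mult_op_strong_conv:
  assumes M: "\<And>j t. cmod (a j t) \<le> M" and conv: "\<And>t. (\<lambda>j. a j t) \<longlonglongrightarrow> b t"
  shows "strong_conv (\<lambda>j. mult_op (a j)) (mult_op b)"
proof (rule strong_conv_by_density)
  show "bounded_op (mult_op (a j)) M" for j by (rule bounded_op_mult[OF M])
  show "bounded_op (mult_op b) M" by (rule bounded_op_mult) (rule LIMSEQ_le_const2[OF tendsto_norm[OF conv]], use M in auto)
  fix u :: "'a \<Rightarrow> complex" and F assume "finite F" "\<And>t. t \<notin> F \<Longrightarrow> u t = 0"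
  then show "(\<lambda>j. l2norm (\<lambda>t. mult_op (a j) u t - mult_op b u t)) \<longlonglongrightarrow> 0"
    unfolding mult_op_def
    by (intro finsupp_l2norm_tendsto0[of F]) (auto intro!: tendsto_eq_intros conv)
qed

(* A diagonal argument over the countable group: a bounded sequence of functions has a
   pointwise convergent subsequence. *)
lemma pointwise_convergent_subseq:
  fixes f :: "nat \<Rightarrow> 'a::countable \<Rightarrow> complex"
  assumes M: "\<And>j t. cmod (f j t) \<le> M"
  shows "\<exists>\<phi>. strict_mono \<phi> \<and> (\<forall>t. convergent (\<lambda>j. f (\<phi> j) t))"
proof -
  define P where "P n s \<longleftrightarrow> convergent (\<lambda>j. f (s j) (from_nat n :: 'a))" for n s
  interpret subseqs P
  proof
    fix n and s :: "nat \<Rightarrow> nat" assume "strict_mono s"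
    have "\<forall>j. f (s j) (from_nat n) \<in> cball 0 M" using M by (simp add: dist_norm)
    then have "\<exists>l\<in>cball 0 M. \<exists>r. strict_mono r \<and> ((\<lambda>j. f (s j) (from_nat n)) \<circ> r) \<longlonglongrightarrow> l"
      by (rule compact_cball[of "0::complex" M, unfolded compact_def, THEN spec[of _ "\<lambda>j. f (s j) (from_nat n)"], THEN mp])
    then obtain l r where "strict_mono r" "((\<lambda>j. f (s j) (from_nat n)) \<circ> r) \<longlonglongrightarrow> l"
      by blast
    then show "\<exists>r'. strict_mono r' \<and> P n (s \<circ> r')"
      unfolding P_def convergent_def by (auto simp: o_def)
  qed
  have "convergent (\<lambda>j. f (diagseq j) t)" for t
  proof -
    let ?n = "to_nat t"
    have "P ?n (diagseq \<circ> (+) (Suc ?n))"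
      by (rule diagseq_holds) (auto simp: P_def o_def dest: convergent_subseq_convergent)
    then have "convergent (\<lambda>j. f (diagseq (j + Suc ?n)) t)" unfolding P_def by (simp add: o_def add.commute)
    then obtain L where "(\<lambda>j. f (diagseq (j + Suc ?n)) t) \<longlonglongrightarrow> L" unfolding convergent_def by blast
    then have "(\<lambda>j. f (diagseq j) t) \<longlonglongrightarrow> L" by (rule LIMSEQ_offset)
    then show ?thesis unfolding convergent_def by blast
  qed
  then show ?thesis using subseq_diagseq by blast
qed

abbreviation compress :: "'a set \<Rightarrow> 'a lop \<Rightarrow> 'a lop" where
  "compress Z G \<equiv> (\<lambda>u t. Proj Z (G (Proj Z u)) t + (u t - Proj Z u t))"

lemma compress_bounded:
  assumes G: "bounded_op G C"
  shows "bounded_op (\<lambda>u t. Proj Z (G (Proj Z u)) t + (u t - Proj Z u t)) (C + 2)"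
  unfolding bounded_op_def lin_def op_norm_le_def
proof (intro conjI ballI allI)
  note L = bounded_opD(1)[OF G] and B = bounded_opD(2)[OF G]
  show "0 \<le> C + 2" using bounded_opD(3)[OF G] by simp
  fix u :: "'a \<Rightarrow> complex" assume u: "u \<in> l2"
  have pu: "Proj Z u \<in> l2" using Proj_l2[OF u] by simp
  have g: "G (Proj Z u) \<in> l2" using op_norm_leD(1)[OF B pu] .
  have a: "Proj Z (G (Proj Z u)) \<in> l2" "l2norm (Proj Z (G (Proj Z u))) \<le> C * l2norm u"
    using Proj_l2(1)[OF g] order_trans[OF Proj_l2(2)[OF g] order_trans[OF op_norm_leD(2)[OF B pu] mult_left_mono[OF Proj_l2(2)[OF u] bounded_opD(3)[OF G]]]]
    by auto
  have b: "(\<lambda>t. u t - Proj Z u t) \<in> l2" "l2norm (\<lambda>t. u t - Proj Z u t) \<le> l2norm u + l2norm u"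
    using l2_diff[OF u pu] Proj_l2(2)[OF u, of Z] by auto
  show "(\<lambda>t. Proj Z (G (Proj Z u)) t + (u t - Proj Z u t)) \<in> l2" using l2_add[OF a(1) b(1)] by simp
  show "l2norm (\<lambda>t. Proj Z (G (Proj Z u)) t + (u t - Proj Z u t)) \<le> (C + 2) * l2norm u"
    using l2_add[OF a(1) b(1)] a(2) b(2) by (simp add: algebra_simps)
  fix c
  show "(\<lambda>t. Proj Z (G (Proj Z (\<lambda>t. c * u t))) t + (c * u t - Proj Z (\<lambda>t. c * u t) t)) =
        (\<lambda>t. c * (Proj Z (G (Proj Z u)) t + (u t - Proj Z u t)))"
    unfolding Proj_scale linD(2)[OF L pu pu] by (auto simp: Proj_def algebra_simps)
next
  fix u w :: "'a \<Rightarrow> complex" assume u: "u \<in> l2" and w: "w \<in> l2"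
  have pu: "Proj Z u \<in> l2" "Proj Z w \<in> l2" using Proj_l2 u w by auto
  show "(\<lambda>t. Proj Z (G (Proj Z (\<lambda>t. u t + w t))) t + (u t + w t - Proj Z (\<lambda>t. u t + w t) t)) =
        (\<lambda>t. Proj Z (G (Proj Z u)) t + (u t - Proj Z u t) + (Proj Z (G (Proj Z w)) t + (w t - Proj Z w t)))"
    unfolding Proj_add linD(1)[OF bounded_opD(1)[OF G] pu] by (auto simp: Proj_def algebra_simps)
qed

lemma compress_diff_bound:
  assumes G: "bounded_op G C" and u: "u \<in> l2" and z: "Ag (Proj YY u) \<in> l2"
  shows "l2norm (\<lambda>t. compress Z G u t - compress YY Ag u t) \<le>
      (C + 1) * l2norm (\<lambda>t. Proj Z u t - Proj YY u t)
      + l2norm (\<lambda>t. G (Proj YY u) t - Ag (Proj YY u) t)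
      + l2norm (\<lambda>t. Proj Z (Ag (Proj YY u)) t - Proj YY (Ag (Proj YY u)) t)"
proof -
  note B = bounded_opD(2)[OF G]
  have pr: "Proj Z u \<in> l2" and pu: "Proj YY u \<in> l2" using Proj_l2 u by auto
  have g1: "G (Proj YY u) \<in> l2" using op_norm_leD(1)[OF B pu] .
  define a1 where "a1 = Proj Z (\<lambda>t. G (Proj Z u) t - G (Proj YY u) t)"
  define a2 where "a2 = Proj Z (\<lambda>t. G (Proj YY u) t - Ag (Proj YY u) t)"
  define a3 where "a3 = (\<lambda>t. Proj Z (Ag (Proj YY u)) t - Proj YY (Ag (Proj YY u)) t)"
  define a4 where "a4 = (\<lambda>t. Proj YY u t - Proj Z u t)"
  have dd1: "(\<lambda>t. G (Proj Z u) t - G (Proj YY u) t) \<in> l2"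
    "l2norm (\<lambda>t. G (Proj Z u) t - G (Proj YY u) t) \<le> C * l2norm (\<lambda>t. Proj Z u t - Proj YY u t)"
    using bounded_op_diff_norm[OF G pr pu] by auto
  have dd2: "(\<lambda>t. G (Proj YY u) t - Ag (Proj YY u) t) \<in> l2" using l2_diff[OF g1 z] by auto
  have a1: "a1 \<in> l2" "l2norm a1 \<le> C * l2norm (\<lambda>t. Proj Z u t - Proj YY u t)"
    unfolding a1_def using Proj_l2(1)[OF dd1(1)] order_trans[OF Proj_l2(2)[OF dd1(1)] dd1(2)] by auto
  have a2: "a2 \<in> l2" "l2norm a2 \<le> l2norm (\<lambda>t. G (Proj YY u) t - Ag (Proj YY u) t)"
    unfolding a2_def using Proj_l2[OF dd2] by auto
  have a3: "a3 \<in> l2" unfolding a3_def using l2_diff[OF Proj_l2(1)[OF z] Proj_l2(1)[OF z]] by auto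
  have a4: "a4 \<in> l2" "l2norm a4 = l2norm (\<lambda>t. Proj Z u t - Proj YY u t)"
    unfolding a4_def using l2_diff[OF pu pr] l2norm_swap by auto
  have "(\<lambda>t. compress Z G u t - compress YY Ag u t) = (\<lambda>t. a1 t + a2 t + a3 t + a4 t)"
    unfolding a1_def a2_def a3_def a4_def by (rule ext) (simp add: Proj_def)
  moreover have "l2norm (\<lambda>t. a1 t + a2 t + a3 t + a4 t) \<le> l2norm a1 + l2norm a2 + l2norm a3 + l2norm a4"
    using l2_add[OF a1(1) a2(1)] l2_add[OF l2_add[OF a1(1) a2(1), THEN conjunct1] a3]
      l2_add[OF l2_add[OF l2_add[OF a1(1) a2(1), THEN conjunct1] a3, THEN conjunct1] a4(1)]
    by linarith
  ultimately show ?thesis using a1(2) a2(2) a4(2) unfolding a3_def by (simp add: algebra_simps)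
qed

lemma compress_strong_conv:
  assumes PY: "strong_conv (\<lambda>r. Proj (Z r)) (Proj YY)"
    and GA: "strong_conv G Ag" and Gb: "\<And>r. bounded_op (G r) C"
  shows "strong_conv (\<lambda>r. compress (Z r) (G r)) (compress YY Ag)"
  unfolding strong_conv_def
proof (intro ballI conjI allI)
  fix u :: "'a \<Rightarrow> complex" assume u: "u \<in> l2"
  have pu: "Proj YY u \<in> l2" using Proj_l2 u by auto
  have z: "Ag (Proj YY u) \<in> l2" using strong_convD(1)[OF GA pu] .
  show "compress YY Ag u \<in> l2"
    using l2_add[OF Proj_l2(1)[OF z] l2_diff[OF u pu, THEN conjunct1]] by simp
  show "compress (Z r) (G r) u \<in> l2" for r
    using op_norm_leD(1)[OF bounded_opD(2)[OF compress_bounded[OF Gb]] u] .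
  have lim: "(\<lambda>r. (C + 1) * l2norm (\<lambda>t. Proj (Z r) u t - Proj YY u t)
      + l2norm (\<lambda>t. G r (Proj YY u) t - Ag (Proj YY u) t)
      + l2norm (\<lambda>t. Proj (Z r) (Ag (Proj YY u)) t - Proj YY (Ag (Proj YY u)) t)) \<longlonglongrightarrow> 0"
    using tendsto_add[OF tendsto_add[OF tendsto_mult_right_zero[OF strong_convD(3)[OF PY u]]
        strong_convD(3)[OF GA pu]] strong_convD(3)[OF PY z]] by simp
  show "(\<lambda>r. l2norm (\<lambda>t. compress (Z r) (G r) u t - compress YY Ag u t)) \<longlonglongrightarrow> 0"
  proof (rule tendsto_sandwich[OF _ _ tendsto_const lim])
    show "\<forall>\<^sub>F r in sequentially. l2norm (\<lambda>t. compress (Z r) (G r) u t - compress YY Ag u t) \<le>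
        (C + 1) * l2norm (\<lambda>t. Proj (Z r) u t - Proj YY u t)
        + l2norm (\<lambda>t. G r (Proj YY u) t - Ag (Proj YY u) t)
        + l2norm (\<lambda>t. Proj (Z r) (Ag (Proj YY u)) t - Proj YY (Ag (Proj YY u)) t)"
      using compress_diff_bound[where Ag=Ag and YY=YY, OF Gb u z] by simp
  qed simp
qed

lemma Lsh_l2:
  assumes "u \<in> l2" shows "Lsh r u \<in> l2" "l2norm (Lsh r u) = l2norm u"
  unfolding Lsh_def using l2_reindex[OF bij_plus[of "- r"], of u] assms by auto

lemma bounded_op_Lsh: "bounded_op (Lsh r) 1"
  unfolding bounded_op_def lin_def op_norm_le_def by (auto simp: Lsh_def Lsh_l2[unfolded Lsh_def])

lemma bounded_op_add:
  assumes "bounded_op S C1" "bounded_op T C2"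
  shows "bounded_op (\<lambda>u t. S u t + T u t) (C1 + C2)"
  unfolding bounded_op_def lin_def op_norm_le_def
proof (intro conjI ballI allI)
  show "0 \<le> C1 + C2" using bounded_opD(3)[OF assms(1)] bounded_opD(3)[OF assms(2)] by simp
  fix u :: "'a \<Rightarrow> complex" assume u: "u \<in> l2"
  have a: "S u \<in> l2" "T u \<in> l2" using op_norm_leD(1)[OF bounded_opD(2)[OF assms(1)] u] op_norm_leD(1)[OF bounded_opD(2)[OF assms(2)] u] by auto
  show "(\<lambda>t. S u t + T u t) \<in> l2" using l2_add[OF a] by simp
  show "l2norm (\<lambda>t. S u t + T u t) \<le> (C1 + C2) * l2norm u"
    using l2_add[OF a] op_norm_leD(2)[OF bounded_opD(2)[OF assms(1)] u] op_norm_leD(2)[OF bounded_opD(2)[OF assms(2)] u]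
    by (simp add: algebra_simps)
  fix c
  show "(\<lambda>t. S (\<lambda>t. c * u t) t + T (\<lambda>t. c * u t) t) = (\<lambda>t. c * (S u t + T u t))"
    using linD(2)[OF bounded_opD(1)[OF assms(1)] u u] linD(2)[OF bounded_opD(1)[OF assms(2)] u u]
    by (simp add: algebra_simps)
next
  fix u w :: "'a \<Rightarrow> complex" assume u: "u \<in> l2" and w: "w \<in> l2"
  show "(\<lambda>t. S (\<lambda>t. u t + w t) t + T (\<lambda>t. u t + w t) t) = (\<lambda>t. S u t + T u t + (S w t + T w t))"
    using linD(1)[OF bounded_opD(1)[OF assms(1)] u w] linD(1)[OF bounded_opD(1)[OF assms(2)] u w]
    by (simp add: algebra_simps)
qed

lemma bounded_op_scale:
  assumes "bounded_op S C"
  shows "bounded_op (\<lambda>u t. c * S u t) (cmod c * C)"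
  unfolding bounded_op_def lin_def op_norm_le_def
proof (intro conjI ballI allI)
  show "0 \<le> cmod c * C" using bounded_opD(3)[OF assms] by simp
  fix u :: "'a \<Rightarrow> complex" assume u: "u \<in> l2"
  have a: "S u \<in> l2" using op_norm_leD(1)[OF bounded_opD(2)[OF assms] u] .
  show "(\<lambda>t. c * S u t) \<in> l2" using l2_scale[OF a] by simp
  show "l2norm (\<lambda>t. c * S u t) \<le> (cmod c * C) * l2norm u"
    using l2_scale[OF a, of c] op_norm_leD(2)[OF bounded_opD(2)[OF assms] u]
    by (metis (no_types, lifting) mult.assoc mult_left_mono norm_ge_zero order_trans)
  fix d
  show "(\<lambda>t. c * S (\<lambda>t. d * u t) t) = (\<lambda>t. d * (c * S u t))"
    using linD(2)[OF bounded_opD(1)[OF assms] u u] by (simp add: algebra_simps)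
next
  fix u w :: "'a \<Rightarrow> complex" assume u: "u \<in> l2" and w: "w \<in> l2"
  show "(\<lambda>t. c * S (\<lambda>t. u t + w t) t) = (\<lambda>t. c * S u t + c * S w t)"
    using linD(1)[OF bounded_opD(1)[OF assms] u w] by (simp add: algebra_simps)
qed

lemma bounded_op_comp:
  assumes "bounded_op S C1" "bounded_op T C2"
  shows "bounded_op (S \<circ> T) (C1 * C2)"
  unfolding bounded_op_def lin_def op_norm_le_def
proof (intro conjI ballI allI)
  show "0 \<le> C1 * C2" using bounded_opD(3)[OF assms(1)] bounded_opD(3)[OF assms(2)] by simp
  fix u :: "'a \<Rightarrow> complex" assume u: "u \<in> l2"
  have a: "T u \<in> l2" using op_norm_leD(1)[OF bounded_opD(2)[OF assms(2)] u] .
  show "(S \<circ> T) u \<in> l2" using op_norm_leD(1)[OF bounded_opD(2)[OF assms(1)] a] by simp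
  have "l2norm (S (T u)) \<le> C1 * l2norm (T u)" using op_norm_leD(2)[OF bounded_opD(2)[OF assms(1)] a] .
  also have "\<dots> \<le> C1 * (C2 * l2norm u)"
    using op_norm_leD(2)[OF bounded_opD(2)[OF assms(2)] u] bounded_opD(3)[OF assms(1)] by (rule mult_left_mono)
  finally show "l2norm ((S \<circ> T) u) \<le> C1 * C2 * l2norm u" by (simp add: mult.assoc)
  fix c
  show "(S \<circ> T) (\<lambda>t. c * u t) = (\<lambda>t. c * (S \<circ> T) u t)"
    using linD(2)[OF bounded_opD(1)[OF assms(2)] u u] linD(2)[OF bounded_opD(1)[OF assms(1)] a a] by simp
next
  fix u w :: "'a \<Rightarrow> complex" assume u: "u \<in> l2" and w: "w \<in> l2"
  have a: "T u \<in> l2" "T w \<in> l2" using op_norm_leD(1)[OF bounded_opD(2)[OF assms(2)]] u w by auto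
  show "(S \<circ> T) (\<lambda>t. u t + w t) = (\<lambda>t. (S \<circ> T) u t + (S \<circ> T) w t)"
    using linD(1)[OF bounded_opD(1)[OF assms(2)] u w] linD(1)[OF bounded_opD(1)[OF assms(1)] a] by simp
qed

lemma BDO_gen_bounded: "B \<in> BDO_gen \<Longrightarrow> \<exists>C. bounded_op B C"
proof (induction rule: BDO_gen.induct)
  case (shift r) then show ?case using bounded_op_Lsh by blast
next
  case (mult a)
  then obtain M where "\<And>t. cmod (a t) \<le> M" unfolding bounded_iff by auto
  then show ?case using bounded_op_mult by blast
next
  case (add S T) then show ?case using bounded_op_add by blast
next
  case (scale S c) then show ?case using bounded_op_scale by blast
next
  case (comp S T) then show ?case using bounded_op_comp by blast
qed

lemma Lsh_adjoint: "is_adjoint (Lsh r) (Lsh (- (r::'g::group_add)))"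
  unfolding is_adjoint_def
proof (intro ballI conjI)
  fix u w :: "'g::group_add \<Rightarrow> complex" assume u: "u \<in> l2" and w: "w \<in> l2"
  show "Lsh r u \<in> l2" "Lsh (- r) w \<in> l2" using Lsh_l2 u w by auto
  have b: "bij_betw (\<lambda>s. r + s) UNIV UNIV" using bij_plus[of r] by (simp add: bij_def)
  have "l2inner (Lsh r u) w = (\<Sum>\<^sub>\<infinity>t. (\<lambda>t. Lsh r u t * cnj (w t)) (r + t))"
    unfolding l2inner_def using infsum_reindex_bij_betw[OF b, of "\<lambda>t. Lsh r u t * cnj (w t)"] by simp
  also have "\<dots> = l2inner u (Lsh (- r) w)"
    unfolding l2inner_def Lsh_def by (simp add: add.assoc[symmetric])
  finally show "l2inner (Lsh r u) w = l2inner u (Lsh (- r) w)" .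
qed

lemma mult_adjoint:
  assumes "bounded (range a)"
  shows "is_adjoint (mult_op a) (mult_op (\<lambda>t. cnj (a t)))"
proof -
  obtain M where M: "\<And>t. cmod (a t) \<le> M" using assms unfolding bounded_iff by auto
  then have M': "\<And>t. cmod (cnj (a t)) \<le> M" by simp
  show ?thesis
    unfolding is_adjoint_def
  proof (intro ballI conjI)
    fix u w :: "'a \<Rightarrow> complex" assume u: "u \<in> l2" and w: "w \<in> l2"
    show "mult_op a u \<in> l2" using op_norm_leD(1)[OF bounded_opD(2)[OF bounded_op_mult[OF M]] u] .
    show "mult_op (\<lambda>t. cnj (a t)) w \<in> l2" using op_norm_leD(1)[OF bounded_opD(2)[OF bounded_op_mult[OF M']] w] .
    show "l2inner (mult_op a u) w = l2inner u (mult_op (\<lambda>t. cnj (a t)) w)"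
      unfolding l2inner_def mult_op_def by (simp add: mult_ac)
  qed
qed

lemma is_adjoint_add:
  assumes S: "is_adjoint S S'" and T: "is_adjoint T T'"
  shows "is_adjoint (\<lambda>u t. S u t + T u t) (\<lambda>u t. S' u t + T' u t)"
  unfolding is_adjoint_def
proof (intro ballI conjI)
  fix u w :: "'a \<Rightarrow> complex" assume u: "u \<in> l2" and w: "w \<in> l2"
  have a: "S u \<in> l2" "T u \<in> l2" "S' w \<in> l2" "T' w \<in> l2" using S T u w unfolding is_adjoint_def by auto
  show "(\<lambda>t. S u t + T u t) \<in> l2" "(\<lambda>t. S' w t + T' w t) \<in> l2" using l2_add a by auto
  have "l2inner (\<lambda>t. S u t + T u t) w = l2inner (S u) w + l2inner (T u) w" by (rule inner_add_left[OF a(1,2) w])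
  also have "\<dots> = l2inner u (S' w) + l2inner u (T' w)" using S T u w unfolding is_adjoint_def by auto
  also have "\<dots> = l2inner u (\<lambda>t. S' w t + T' w t)" by (rule inner_add_right[OF a(3,4) u, symmetric])
  finally show "l2inner (\<lambda>t. S u t + T u t) w = l2inner u (\<lambda>t. S' w t + T' w t)" .
qed

lemma is_adjoint_scale:
  assumes S: "is_adjoint S S'"
  shows "is_adjoint (\<lambda>u t. c * S u t) (\<lambda>u t. cnj c * S' u t)"
  unfolding is_adjoint_def
proof (intro ballI conjI)
  fix u w :: "'a \<Rightarrow> complex" assume u: "u \<in> l2" and w: "w \<in> l2"
  have a: "S u \<in> l2" "S' w \<in> l2" using S u w unfolding is_adjoint_def by auto
  show "(\<lambda>t. c * S u t) \<in> l2" "(\<lambda>t. cnj c * S' w t) \<in> l2" using l2_scale a by auto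
  show "l2inner (\<lambda>t. c * S u t) w = l2inner u (\<lambda>t. cnj c * S' w t)"
    using S u w unfolding is_adjoint_def by (simp add: inner_scale_left inner_scale_right)
qed

lemma is_adjoint_comp:
  assumes S: "is_adjoint S S'" and T: "is_adjoint T T'"
  shows "is_adjoint (S \<circ> T) (T' \<circ> S')"
  unfolding is_adjoint_def
proof (intro ballI conjI)
  fix u w :: "'a \<Rightarrow> complex" assume u: "u \<in> l2" and w: "w \<in> l2"
  have a: "T u \<in> l2" "S' w \<in> l2" using S T u w unfolding is_adjoint_def by auto
  show "(S \<circ> T) u \<in> l2" "(T' \<circ> S') w \<in> l2" using S T a unfolding is_adjoint_def by auto
  have "l2inner (S (T u)) w = l2inner (T u) (S' w)" using S a w unfolding is_adjoint_def by auto
  also have "\<dots> = l2inner u (T' (S' w))" using T a u unfolding is_adjoint_def by auto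
  finally show "l2inner ((S \<circ> T) u) w = l2inner u ((T' \<circ> S') w)" by simp
qed

lemma BDO_gen_adjoint: "B \<in> BDO_gen \<Longrightarrow> \<exists>B'\<in>BDO_gen. is_adjoint B B'"
proof (induction rule: BDO_gen.induct)
  case (shift r) then show ?case using Lsh_adjoint BDO_gen.shift by blast
next
  case (mult a)
  have "bounded (range (\<lambda>t. cnj (a t)))" using mult unfolding bounded_iff by auto
  then show ?case using mult_adjoint[OF mult] BDO_gen.mult by blast
next
  case (add S T) then show ?case using is_adjoint_add BDO_gen.add by blast
next
  case (scale S c) then show ?case using is_adjoint_scale BDO_gen.scale by blast
next
  case (comp S T) then show ?case using is_adjoint_comp BDO_gen.comp by blast
qed

lemma l2_small_zero:
  assumes z: "z \<in> l2" and K: "0 \<le> K" and small: "\<And>e. 0 < e \<Longrightarrow> l2norm z \<le> K * e"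
  shows "z = (\<lambda>t. 0)"
proof -
  have "complex_of_real (l2norm z) = 0" by (rule small_zero[OF _ K]) (use small in auto)
  then show ?thesis using l2norm_eq0[OF z] by simp
qed

(* An operator on l^2 that is a norm limit of linear operators is additive and homogeneous:
   the defect vanishes since it is bounded by every positive multiple of a constant. *)
lemma additive_by_approx:
  assumes Al2: "\<And>u. u \<in> l2 \<Longrightarrow> A u \<in> l2"
    and appr: "\<And>e. 0 < e \<Longrightarrow> \<exists>B. lin B \<and> (\<forall>u\<in>l2. (\<lambda>t. A u t - B u t) \<in> l2 \<and>
                  l2norm (\<lambda>t. A u t - B u t) \<le> e * l2norm u)"
    and u: "u \<in> l2" and w: "w \<in> l2"
  shows "A (\<lambda>t. u t + w t) = (\<lambda>t. A u t + A w t)"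
proof -
  have uw: "(\<lambda>t. u t + w t) \<in> l2" using l2_add[OF u w] by simp
  let ?z = "\<lambda>t. A (\<lambda>t. u t + w t) t - (A u t + A w t)"
  have "?z = (\<lambda>t. 0)"
  proof (rule l2_small_zero)
    show "?z \<in> l2"
      using l2_diff[OF Al2[OF uw] l2_add[OF Al2[OF u] Al2[OF w], THEN conjunct1]] by simp
    fix e :: real assume e: "0 < e"
    obtain B where B: "lin B" "\<forall>u\<in>l2. (\<lambda>t. A u t - B u t) \<in> l2 \<and>
        l2norm (\<lambda>t. A u t - B u t) \<le> e * l2norm u" using appr[OF e] by blast
    have d1: "(\<lambda>t. A (\<lambda>t. u t + w t) t - B (\<lambda>t. u t + w t) t) \<in> l2"
      "(\<lambda>t. A u t - B u t) \<in> l2" "(\<lambda>t. A w t - B w t) \<in> l2" using B(2) u w uw by auto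
    have z: "?z = (\<lambda>t. (A (\<lambda>t. u t + w t) t - B (\<lambda>t. u t + w t) t) - (A u t - B u t) - (A w t - B w t))"
      using linD(1)[OF B(1) u w] by (auto simp: algebra_simps)
    have "l2norm ?z \<le> l2norm (\<lambda>t. A (\<lambda>t. u t + w t) t - B (\<lambda>t. u t + w t) t)
        + l2norm (\<lambda>t. A u t - B u t) + l2norm (\<lambda>t. A w t - B w t)"
      unfolding z using l2_diff[OF d1(1,2)] l2_diff[OF l2_diff[OF d1(1,2), THEN conjunct1] d1(3)]
      by linarith
    also have "\<dots> \<le> e * l2norm (\<lambda>t. u t + w t) + e * l2norm u + e * l2norm w"
      using B(2) u w uw by (intro add_mono) auto
    finally show "l2norm ?z \<le> (l2norm (\<lambda>t. u t + w t) + l2norm u + l2norm w) * e"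
      by (simp add: algebra_simps)
  qed simp
  then show ?thesis by (metis (no_types) eq_iff_diff_eq_0 ext)
qed

lemma homogeneous_by_approx:
  assumes Al2: "\<And>u. u \<in> l2 \<Longrightarrow> A u \<in> l2"
    and appr: "\<And>e. 0 < e \<Longrightarrow> \<exists>B. lin B \<and> (\<forall>u\<in>l2. (\<lambda>t. A u t - B u t) \<in> l2 \<and>
                  l2norm (\<lambda>t. A u t - B u t) \<le> e * l2norm u)"
    and u: "u \<in> l2"
  shows "A (\<lambda>t. c * u t) = (\<lambda>t. c * A u t)"
proof -
  have cu: "(\<lambda>t. c * u t) \<in> l2" using l2_scale[OF u] by simp
  let ?z = "\<lambda>t. A (\<lambda>t. c * u t) t - c * A u t"
  have "?z = (\<lambda>t. 0)"
  proof (rule l2_small_zero)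
    show "?z \<in> l2" using l2_diff[OF Al2[OF cu] l2_scale[OF Al2[OF u], THEN conjunct1]] by simp
    fix e :: real assume e: "0 < e"
    obtain B where B: "lin B" "\<forall>u\<in>l2. (\<lambda>t. A u t - B u t) \<in> l2 \<and>
        l2norm (\<lambda>t. A u t - B u t) \<le> e * l2norm u" using appr[OF e] by blast
    have d1: "(\<lambda>t. A (\<lambda>t. c * u t) t - B (\<lambda>t. c * u t) t) \<in> l2" "(\<lambda>t. A u t - B u t) \<in> l2"
      using B(2) u cu by auto
    have z: "?z = (\<lambda>t. (A (\<lambda>t. c * u t) t - B (\<lambda>t. c * u t) t) - c * (A u t - B u t))"
      using linD(2)[OF B(1) u u] by (auto simp: algebra_simps)
    have "l2norm ?z \<le> l2norm (\<lambda>t. A (\<lambda>t. c * u t) t - B (\<lambda>t. c * u t) t)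
        + cmod c * l2norm (\<lambda>t. A u t - B u t)"
      unfolding z using l2_diff[OF d1(1) l2_scale[OF d1(2), of c, THEN conjunct1]] l2_scale[OF d1(2), of c]
      by linarith
    also have "\<dots> \<le> e * l2norm (\<lambda>t. c * u t) + cmod c * (e * l2norm u)"
      using B(2) u cu by (intro add_mono mult_left_mono) auto
    finally show "l2norm ?z \<le> (l2norm (\<lambda>t. c * u t) + cmod c * l2norm u) * e"
      by (simp add: algebra_simps)
  qed simp
  then show ?thesis by (metis (no_types) eq_iff_diff_eq_0 ext)
qed

lemma lin_by_approx:
  assumes Al2: "\<And>u. u \<in> l2 \<Longrightarrow> A u \<in> l2"
    and appr: "\<And>e. 0 < e \<Longrightarrow> \<exists>B. lin B \<and> (\<forall>u\<in>l2. (\<lambda>t. A u t - B u t) \<in> l2 \<and>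
                  l2norm (\<lambda>t. A u t - B u t) \<le> e * l2norm u)"
  shows "lin A"
  unfolding lin_def using additive_by_approx[OF Al2 appr] homogeneous_by_approx[OF Al2 appr] by blast

lemma BDO_bounded:
  assumes A: "A \<in> BDO"
  shows "\<exists>C. bounded_op A C"
proof -
  have appr: "\<exists>B\<in>BDO_gen. \<forall>u\<in>l2. (\<lambda>t. A u t - B u t) \<in> l2 \<and> l2norm (\<lambda>t. A u t - B u t) \<le> e * l2norm u"
    if "0 < e" for e using A that unfolding BDO_def by blast
  obtain B where B: "B \<in> BDO_gen" "\<forall>u\<in>l2. (\<lambda>t. A u t - B u t) \<in> l2 \<and> l2norm (\<lambda>t. A u t - B u t) \<le> 1 * l2norm u"
    using appr[of 1] by auto
  obtain C where C: "bounded_op B C" using BDO_gen_bounded[OF B(1)] by blast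
  have Al2: "A u \<in> l2 \<and> l2norm (A u) \<le> (C + 1) * l2norm u" if u: "u \<in> l2" for u
  proof -
    have b: "B u \<in> l2" "l2norm (B u) \<le> C * l2norm u" using op_norm_leD[OF bounded_opD(2)[OF C] u] by auto
    have "A u = (\<lambda>t. B u t + (A u t - B u t))" by simp
    then show ?thesis using l2_add[OF b(1), of "\<lambda>t. A u t - B u t"] b(2) B(2) u
      by (auto simp: algebra_simps)
  qed
  have "lin A"
  proof (rule lin_by_approx)
    show "A u \<in> l2" if "u \<in> l2" for u using Al2[OF that] by simp
    fix e :: real assume "0 < e"
    then obtain B' where B': "B' \<in> BDO_gen" "\<forall>u\<in>l2. (\<lambda>t. A u t - B' u t) \<in> l2 \<and>
        l2norm (\<lambda>t. A u t - B' u t) \<le> e * l2norm u" using appr by blast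
    obtain C' where "bounded_op B' C'" using BDO_gen_bounded[OF B'(1)] by blast
    then show "\<exists>B. lin B \<and> (\<forall>u\<in>l2. (\<lambda>t. A u t - B u t) \<in> l2 \<and> l2norm (\<lambda>t. A u t - B u t) \<le> e * l2norm u)"
      using bounded_opD(1) B'(2) by blast
  qed
  then have "bounded_op A (C + 1)" unfolding bounded_op_def op_norm_le_def using Al2 bounded_opD(3)[OF C] by auto
  then show ?thesis by blast
qed

(* All generators are rich (for multiplication operators this is a
   diagonal argument), richness passes to sums, scalar multiples and products, and by
   approximation to all of BDO.  Completeness then yields limit operators. *)
definition rich :: "('g::group_add) lop \<Rightarrow> bool" where
  "rich T \<longleftrightarrow> (\<forall>g::nat \<Rightarrow> 'g. \<exists>\<phi>. strict_mono \<phi> \<and> scauchy (\<lambda>j. shift_conj (g (\<phi> j)) T))"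

lemma conj_add: "shift_conj s (\<lambda>u t. S u t + T u t) = (\<lambda>u t. shift_conj s S u t + shift_conj s T u t)"
  by (rule ext)+ (simp add: Rsh_def)

lemma conj_scale: "shift_conj s (\<lambda>u t. c * S u t) = (\<lambda>u t. c * shift_conj s S u t)"
  by (rule ext)+ (simp add: Rsh_def)

lemma conj_comp: "shift_conj s (S \<circ> T) = shift_conj s S \<circ> shift_conj (s::'g::group_add) T"
  by (rule ext) simp

lemma conj_Lsh: "shift_conj s (Lsh r) = Lsh (r::'g::group_add)"
  by (rule ext)+ (simp add: Rsh_def Lsh_def add.assoc)

lemma conj_mult: "shift_conj s (mult_op a) = mult_op (\<lambda>t. a (t + - (s::'g::group_add)))"
  by (rule ext)+ (simp add: Rsh_def mult_op_def add.assoc)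

lemma rich_Lsh: "rich (Lsh r)"
  unfolding rich_def conj_Lsh scauchy_def using strict_mono_id by auto

lemma rich_mult:
  fixes a :: "'g::{group_add,countable} \<Rightarrow> complex"
  assumes "bounded (range a)"
  shows "rich (mult_op a)"
  unfolding rich_def
proof
  fix g :: "nat \<Rightarrow> 'g"
  obtain M where M: "\<And>t. cmod (a t) \<le> M" using assms unfolding bounded_iff by auto
  obtain \<phi> where \<phi>: "strict_mono \<phi>" "\<And>t. convergent (\<lambda>j. a (t + - g (\<phi> j)))"
    using pointwise_convergent_subseq[of "\<lambda>j t. a (t + - g j)" M] M by blast
  have "strong_conv (\<lambda>j. mult_op (\<lambda>t. a (t + - g (\<phi> j)))) (mult_op (\<lambda>t. lim (\<lambda>j. a (t + - g (\<phi> j)))))"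
    by (rule mult_op_strong_conv[where M=M]) (use M \<phi>(2) in \<open>auto simp: convergent_LIMSEQ_iff\<close>)
  then show "\<exists>\<phi>. strict_mono \<phi> \<and> scauchy (\<lambda>j. shift_conj (g (\<phi> j)) (mult_op a))"
    unfolding conj_mult using \<phi>(1) strong_conv_scauchy by blast
qed

lemma rich_pair:
  fixes g :: "nat \<Rightarrow> 'g::group_add"
  assumes "rich S" "rich T"
  shows "\<exists>\<phi>. strict_mono \<phi> \<and> scauchy (\<lambda>j. shift_conj (g (\<phi> j)) S) \<and>
             scauchy (\<lambda>j. shift_conj (g (\<phi> j)) T)"
proof -
  obtain \<phi>1 where p1: "strict_mono \<phi>1" "scauchy (\<lambda>j. shift_conj (g (\<phi>1 j)) S)"
    using assms(1)[unfolded rich_def, rule_format, of g] by blast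
  obtain \<phi>2 where p2: "strict_mono \<phi>2" "scauchy (\<lambda>j. shift_conj (g (\<phi>1 (\<phi>2 j))) T)"
    using assms(2)[unfolded rich_def, rule_format, of "\<lambda>j. g (\<phi>1 j)"] by blast
  show ?thesis
    using scauchy_subseq[OF p1(2) p2(1)] p2(2) strict_mono_o[OF p1(1) p2(1)]
    by (intro exI[of _ "\<phi>1 \<circ> \<phi>2"]) (simp add: o_def)
qed

lemma rich_add:
  assumes "rich S" "rich T" "bounded_op S C1" "bounded_op T C2"
  shows "rich (\<lambda>u t. S u t + T u t)"
  unfolding rich_def conj_add
proof
  fix g :: "nat \<Rightarrow> 'a"
  obtain \<phi> where \<phi>: "strict_mono \<phi>" "scauchy (\<lambda>j. shift_conj (g (\<phi> j)) S)"
    "scauchy (\<lambda>j. shift_conj (g (\<phi> j)) T)" using rich_pair[OF assms(1,2)] by blast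
  have "scauchy (\<lambda>j u t. shift_conj (g (\<phi> j)) S u t + shift_conj (g (\<phi> j)) T u t)"
    by (rule scauchy_add[OF \<phi>(2,3)])
       (use op_norm_leD(1)[OF bounded_opD(2)[OF conj_bounded[OF assms(3)]]] op_norm_leD(1)[OF bounded_opD(2)[OF conj_bounded[OF assms(4)]]] in auto)
  then show "\<exists>\<phi>. strict_mono \<phi> \<and>
      scauchy (\<lambda>j u t. shift_conj (g (\<phi> j)) S u t + shift_conj (g (\<phi> j)) T u t)"
    using \<phi>(1) by blast
qed

lemma rich_scale:
  assumes "rich S" "bounded_op S C"
  shows "rich (\<lambda>u t. c * S u t)"
  unfolding rich_def conj_scale
proof
  fix g :: "nat \<Rightarrow> 'a"
  obtain \<phi> where \<phi>: "strict_mono \<phi>" "scauchy (\<lambda>j. shift_conj (g (\<phi> j)) S)"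
    using assms(1) unfolding rich_def by blast
  have "scauchy (\<lambda>j u t. c * shift_conj (g (\<phi> j)) S u t)"
    by (rule scauchy_scale[OF \<phi>(2)]) (use op_norm_leD(1)[OF bounded_opD(2)[OF conj_bounded[OF assms(2)]]] in auto)
  then show "\<exists>\<phi>. strict_mono \<phi> \<and> scauchy (\<lambda>j u t. c * shift_conj (g (\<phi> j)) S u t)"
    using \<phi>(1) by blast
qed

lemma rich_comp:
  assumes "rich S" "rich T" "bounded_op S C1" "bounded_op T C2"
  shows "rich (S \<circ> T)"
  unfolding rich_def conj_comp
proof
  fix g :: "nat \<Rightarrow> 'a"
  obtain \<phi> where \<phi>: "strict_mono \<phi>" "scauchy (\<lambda>j. shift_conj (g (\<phi> j)) S)"
    "scauchy (\<lambda>j. shift_conj (g (\<phi> j)) T)" using rich_pair[OF assms(1,2)] by blast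
  have "scauchy (\<lambda>j. shift_conj (g (\<phi> j)) S \<circ> shift_conj (g (\<phi> j)) T)"
    by (rule scauchy_comp[OF \<phi>(2,3) conj_bounded[OF assms(3)] conj_bounded[OF assms(4)]])
  then show "\<exists>\<phi>. strict_mono \<phi> \<and> scauchy (\<lambda>j. shift_conj (g (\<phi> j)) S \<circ> shift_conj (g (\<phi> j)) T)"
    using \<phi>(1) by blast
qed

lemma rich_gen: "B \<in> BDO_gen \<Longrightarrow> rich (B :: ('g::{group_add,countable}) lop)"
proof (induction rule: BDO_gen.induct)
  case (shift r) then show ?case by (rule rich_Lsh)
next
  case (mult a) then show ?case by (rule rich_mult)
next
  case (add S T) then show ?case using rich_add BDO_gen_bounded by metis
next
  case (scale S c) then show ?case using rich_scale BDO_gen_bounded by metis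
next
  case (comp S T) then show ?case using rich_comp BDO_gen_bounded by metis
qed

lemma conj_diff_norm:
  fixes s :: "'g::group_add"
  assumes "u \<in> l2" "\<And>x. x \<in> l2 \<Longrightarrow> l2norm (\<lambda>t. A x t - B x t) \<le> c * l2norm x"
  shows "l2norm (\<lambda>t. (shift_conj s A) u t - (shift_conj s B) u t) \<le> c * l2norm u"
proof -
  have su: "Rsh s u \<in> l2" using Rsh_l2 assms(1) by auto
  have "(\<lambda>t. (shift_conj s A) u t - (shift_conj s B) u t) = Rsh (- s) (\<lambda>t. A (Rsh s u) t - B (Rsh s u) t)"
    by (simp add: Rsh_def)
  moreover have "l2norm (Rsh (- s) (\<lambda>t. A (Rsh s u) t - B (Rsh s u) t)) = l2norm (\<lambda>t. A (Rsh s u) t - B (Rsh s u) t)"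
    unfolding Rsh_def by (rule l2_reindex(2)[OF bij_plus_right])
  ultimately have "l2norm (\<lambda>t. (shift_conj s A) u t - (shift_conj s B) u t) = l2norm (\<lambda>t. A (Rsh s u) t - B (Rsh s u) t)"
    by simp
  also have "\<dots> \<le> c * l2norm (Rsh s u)" by (rule assms(2)[OF su])
  also have "\<dots> = c * l2norm u" using Rsh_l2(2)[OF assms(1)] by simp
  finally show ?thesis .
qed


lemma BDO_approx_seq:
  assumes A: "A \<in> BDO"
  obtains B B' where "\<And>i. B i \<in> BDO_gen" "\<And>i. B' i \<in> BDO_gen" "\<And>i. is_adjoint (B i) (B' i)"
    "\<And>i u. u \<in> l2 \<Longrightarrow> (\<lambda>t. A u t - B i u t) \<in> l2 \<and>
        l2norm (\<lambda>t. A u t - B i u t) \<le> (1 / real (Suc i)) * l2norm u"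
proof -
  have "\<exists>B. B \<in> BDO_gen \<and> (\<forall>u\<in>l2. (\<lambda>t. A u t - B u t) \<in> l2 \<and>
      l2norm (\<lambda>t. A u t - B u t) \<le> (1 / real (Suc i)) * l2norm u)" for i
  proof -
    have "(0::real) < 1 / real (Suc i)" by simp
    then show ?thesis using A unfolding BDO_def by blast
  qed
  then obtain B where B: "\<And>i. B i \<in> BDO_gen"
    "\<And>i u. u \<in> l2 \<Longrightarrow> (\<lambda>t. A u t - B i u t) \<in> l2 \<and>
        l2norm (\<lambda>t. A u t - B i u t) \<le> (1 / real (Suc i)) * l2norm u"
    by metis
  have "\<forall>i. \<exists>B'. B' \<in> BDO_gen \<and> is_adjoint (B i) B'" using BDO_gen_adjoint B(1) by blast
  then obtain B' where B': "\<And>i. B' i \<in> BDO_gen" "\<And>i. is_adjoint (B i) (B' i)" by metis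
  show ?thesis by (rule that[OF B(1) B'(1) B'(2) B(2)])
qed

lemma rich_diagonal:
  fixes g :: "nat \<Rightarrow> 'g::group_add" and S T :: "nat \<Rightarrow> 'g lop"
  assumes S: "\<And>i. rich (S i)" and T: "\<And>i. rich (T i)"
  shows "\<exists>\<phi>. strict_mono \<phi> \<and> (\<forall>i. scauchy (\<lambda>j. shift_conj (g (\<phi> j)) (S i)) \<and>
                                   scauchy (\<lambda>j. shift_conj (g (\<phi> j)) (T i)))"
proof -
  define P where "P i (s :: nat \<Rightarrow> nat) \<longleftrightarrow> scauchy (\<lambda>j. shift_conj (g (s j)) (S i)) \<and>
                             scauchy (\<lambda>j. shift_conj (g (s j)) (T i))" for i s
  interpret subseqs P
  proof
    fix n and s :: "nat \<Rightarrow> nat"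
    obtain r where "strict_mono r" "P n (s \<circ> r)"
      using rich_pair[OF S T, of "\<lambda>j. g (s j)"] unfolding P_def by (auto simp: o_def)
    then show "\<exists>r'. strict_mono r' \<and> P n (s \<circ> r')" by blast
  qed
  have stab: "\<And>r s n. strict_mono r \<Longrightarrow> P n s \<Longrightarrow> P n (s \<circ> r)"
    unfolding P_def using scauchy_subseq by (simp add: o_def) blast
  have "scauchy (\<lambda>j. shift_conj (g (diagseq j)) (S i)) \<and>
      scauchy (\<lambda>j. shift_conj (g (diagseq j)) (T i))" for i
  proof -
    have "P i (diagseq \<circ> (+) (Suc i))" by (rule diagseq_holds[OF stab])
    then have a: "scauchy (\<lambda>j. shift_conj (g (diagseq (Suc i + j))) (S i))"
      and b: "scauchy (\<lambda>j. shift_conj (g (diagseq (Suc i + j))) (T i))"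
      unfolding P_def by (simp_all add: o_def)
    show ?thesis using scauchy_shift[OF a] scauchy_shift[OF b] by blast
  qed
  then show ?thesis using subseq_diagseq by blast
qed

lemma adj_approx:
  assumes A: "bounded_op A C" and B: "bounded_op B D" and B': "is_adjoint B B'"
    and appr: "\<And>u. u \<in> l2 \<Longrightarrow> (\<lambda>t. A u t - B u t) \<in> l2 \<and> l2norm (\<lambda>t. A u t - B u t) \<le> c * l2norm u"
    and c: "0 \<le> c" and x: "x \<in> l2"
  shows "l2norm (\<lambda>t. adj A x t - B' x t) \<le> c * l2norm x"
proof -
  define E where "E = (\<lambda>u t. A u t - B u t)"
  have "lin E" unfolding lin_def E_def
    using linD[OF bounded_opD(1)[OF A]] linD[OF bounded_opD(1)[OF B]] by (auto simp: algebra_simps)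
  then have Eb: "bounded_op E c" unfolding bounded_op_def op_norm_le_def E_def using appr c by auto
  have "adj A x t - B' x t = adj E x t" for t
  proof -
    have "B' x t = adj B x t" using adj_unique[OF B' x] by simp
    moreover have "adj E x t = adj A x t - adj B x t"
      unfolding adj_def E_def
      by (rule inner_diff_right[OF op_norm_leD(1)[OF bounded_opD(2)[OF A] delta_l2] op_norm_leD(1)[OF bounded_opD(2)[OF B] delta_l2] x])
    ultimately show ?thesis by simp
  qed
  then show ?thesis using adj_l2[OF Eb x] by simp
qed

lemma scauchy_conj_approx:
  assumes A: "bounded_op A C" and Bb: "\<And>i. \<exists>c. bounded_op (B i) c"
    and sc: "\<And>i. scauchy (\<lambda>j. shift_conj (s j) (B i))"
    and appr: "\<And>i u. u \<in> l2 \<Longrightarrow> l2norm (\<lambda>t. A u t - B i u t) \<le> (1 / real (Suc i)) * l2norm u"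
  shows "scauchy (\<lambda>j. shift_conj (s j) A)"
proof (rule approx_scauchy[where S="\<lambda>i j. shift_conj (s j) (B i)", OF sc])
  show "shift_conj (s n) A u \<in> l2" if "u \<in> l2" for n u
    using op_norm_leD(1)[OF bounded_opD(2)[OF conj_bounded[OF A]] that] .
  show "shift_conj (s n) (B i) u \<in> l2" if "u \<in> l2" for i n u
    using Bb[of i] op_norm_leD(1)[OF bounded_opD(2)[OF conj_bounded] that] by blast
  show "l2norm (\<lambda>t. shift_conj (s n) A u t - shift_conj (s n) (B i) u t) \<le> l2norm u / (Suc i)"
    if "u \<in> l2" for i n u
    using conj_diff_norm[OF that, of A "B i" "1 / real (Suc i)" "s n"] appr by simp
qed

lemma BDO_limit:
  fixes A :: "('g::{group_add,countable}) lop" and g :: "nat \<Rightarrow> 'g"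
  assumes A: "A \<in> BDO"
  shows "\<exists>\<phi> Ag. strict_mono \<phi> \<and> is_limit_op A (\<lambda>j. g (\<phi> j)) Ag"
proof -
  obtain C where C: "bounded_op A C" using BDO_bounded[OF A] by blast
  obtain B B' where B: "\<And>i. B i \<in> BDO_gen" and B': "\<And>i. B' i \<in> BDO_gen"
    and BB': "\<And>i. is_adjoint (B i) (B' i)"
    and appr: "\<And>i u. u \<in> l2 \<Longrightarrow> (\<lambda>t. A u t - B i u t) \<in> l2 \<and>
        l2norm (\<lambda>t. A u t - B i u t) \<le> (1 / real (Suc i)) * l2norm u"
    using BDO_approx_seq[OF A] by blast
  obtain \<phi> where \<phi>: "strict_mono \<phi>" and scB: "\<And>i. scauchy (\<lambda>j. shift_conj (g (\<phi> j)) (B i))"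
    and scB': "\<And>i. scauchy (\<lambda>j. shift_conj (g (\<phi> j)) (B' i))"
    using rich_diagonal[of B B' g] rich_gen B B' by blast
  have Bb: "\<exists>c. bounded_op (B i) c" and B'b: "\<exists>c. bounded_op (B' i) c" for i using BDO_gen_bounded B B' by blast+
  have sA: "scauchy (\<lambda>j. shift_conj (g (\<phi> j)) A)"
    by (rule scauchy_conj_approx[OF C Bb scB]) (use appr in blast)
  have sAs: "scauchy (\<lambda>j. shift_conj (g (\<phi> j)) (adj A))"
  proof (rule scauchy_conj_approx[OF adj_bounded[OF C] B'b scB'])
    fix i and u :: "'g \<Rightarrow> complex" assume "u \<in> l2"
    then show "l2norm (\<lambda>t. adj A u t - B' i u t) \<le> 1 / real (Suc i) * l2norm u"
      using Bb[of i] adj_approx[OF C _ BB' appr] by fastforce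
  qed
  define Ag where "Ag = (\<lambda>u t. lim (\<lambda>n. shift_conj (g (\<phi> n)) A u t))"
  define Ags where "Ags = (\<lambda>u t. lim (\<lambda>n. shift_conj (g (\<phi> n)) (adj A) u t))"
  have c1: "strong_conv (\<lambda>j. shift_conj (g (\<phi> j)) A) Ag"
    unfolding Ag_def by (rule scauchy_lim[OF _ sA]) (use op_norm_leD(1)[OF bounded_opD(2)[OF conj_bounded[OF C]]] in blast)
  have c2: "strong_conv (\<lambda>j. shift_conj (g (\<phi> j)) (adj A)) Ags"
    unfolding Ags_def
    by (rule scauchy_lim[OF _ sAs]) (use op_norm_leD(1)[OF bounded_opD(2)[OF conj_bounded[OF adj_bounded[OF C]]]] in blast)
  have "is_adjoint Ag Ags"
    by (rule adjoint_limit[OF c1 c2 conj_adjoint[OF adj_is_adjoint[OF C]]])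
  then show ?thesis unfolding is_limit_op_def using c1 c2 adj_is_adjoint[OF C] \<phi> by blast
qed

lemma strong_limit_bounded:
  assumes conv: "strong_conv T L" and Tb: "\<And>n. bounded_op (T n) C"
  shows "bounded_op L C"
proof -
  have C0: "0 \<le> C" using bounded_opD(3)[OF Tb] .
  have pt: "(\<lambda>n. T n u t) \<longlonglongrightarrow> L u t" if u: "u \<in> l2" for u t
  proof -
    have "norm (T n u t - L u t) \<le> l2norm (\<lambda>t. T n u t - L u t)" for n
      using l2_point[OF l2_diff[OF strong_convD(2,1)[OF conv u], THEN conjunct1]] by simp
    then have "(\<lambda>n. T n u t - L u t) \<longlonglongrightarrow> 0"
      by (rule Lim_null_comparison[OF always_eventually[OF allI]]) (rule strong_convD(3)[OF conv u])
    then show ?thesis by (simp add: LIM_zero_iff)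
  qed
  have "lin L"
    unfolding lin_def
  proof (intro conjI ballI allI ext)
    fix u w :: "'a \<Rightarrow> complex" and t assume u: "u \<in> l2" and w: "w \<in> l2"
    have "(\<lambda>n. T n (\<lambda>t. u t + w t) t) \<longlonglongrightarrow> L u t + L w t"
      using tendsto_add[OF pt[OF u] pt[OF w]] linD(1)[OF bounded_opD(1)[OF Tb] u w] by simp
    then show "L (\<lambda>t. u t + w t) t = L u t + L w t"
      using pt[OF l2_add[OF u w, THEN conjunct1]] LIMSEQ_unique by blast
  next
    fix u :: "'a \<Rightarrow> complex" and c t assume u: "u \<in> l2"
    have "(\<lambda>n. T n (\<lambda>t. c * u t) t) \<longlonglongrightarrow> c * L u t"
      using tendsto_mult_left[OF pt[OF u], of c] linD(2)[OF bounded_opD(1)[OF Tb] u u] by simp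
    then show "L (\<lambda>t. c * u t) t = c * L u t"
      using pt[OF l2_scale[OF u, THEN conjunct1]] LIMSEQ_unique by blast
  qed
  moreover have "l2norm (L u) \<le> C * l2norm u" if u: "u \<in> l2" for u
  proof -
    note d = strong_convD[OF conv u]
    have "l2norm (L u) - C * l2norm u \<le> l2norm (\<lambda>t. T n u t - L u t)" for n
    proof -
      have "L u = (\<lambda>t. T n u t - (T n u t - L u t))" by simp
      then have "l2norm (L u) \<le> l2norm (T n u) + l2norm (\<lambda>t. T n u t - L u t)"
        using l2_diff[OF d(2) l2_diff[OF d(2) d(1), THEN conjunct1]] by metis
      then show ?thesis using op_norm_leD(2)[OF bounded_opD(2)[OF Tb] u, of n] by linarith
    qed
    then have "l2norm (L u) - C * l2norm u \<le> 0"
      by (intro tendsto_lowerbound[OF d(3)] always_eventually allI) auto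
    then show ?thesis by simp
  qed
  ultimately show ?thesis unfolding bounded_op_def op_norm_le_def using C0 strong_convD(1)[OF conv] by blast
qed

lemma strong_conv_eventually_agree:
  assumes Tb: "\<And>n. bounded_op (T n) C" and Lb: "\<And>n. bounded_op (L' n) D" and LC: "strong_conv L' L"
    and agree: "\<And>u F. finite F \<Longrightarrow> (\<And>t. t \<notin> F \<Longrightarrow> u t = 0) \<Longrightarrow>
                  \<forall>\<^sub>F n in sequentially. T n u = L' n u"
  shows "strong_conv T L"
proof (rule strong_conv_by_density[OF Tb strong_limit_bounded[OF LC Lb]])
  fix u :: "'a \<Rightarrow> complex" and F assume F: "finite F" "\<And>t. t \<notin> F \<Longrightarrow> u t = 0"
  have "(\<lambda>n. l2norm (\<lambda>t. L' n u t - L u t)) \<longlonglongrightarrow> 0"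
    using strong_convD(3)[OF LC l2_finsupp(1)[OF F]] .
  moreover have "\<forall>\<^sub>F n in sequentially. l2norm (\<lambda>t. T n u t - L u t) = l2norm (\<lambda>t. L' n u t - L u t)"
    using agree[where u=u, OF F] by (auto elim: eventually_mono)
  ultimately show "(\<lambda>n. l2norm (\<lambda>t. T n u t - L u t)) \<longlonglongrightarrow> 0"
    using tendsto_cong by fastforce
qed

lemma projnorm_sq:
  assumes "u \<in> l2"
  shows "(l2norm (Proj S u))\<^sup>2 = (\<Sum>\<^sub>\<infinity>t\<in>S. (cmod (u t))\<^sup>2)"
proof -
  have "(l2norm (Proj S u))\<^sup>2 = (\<Sum>\<^sub>\<infinity>t. (cmod (Proj S u t))\<^sup>2)" by (rule l2norm_sq)
  also have "\<dots> = (\<Sum>\<^sub>\<infinity>t\<in>S. (cmod (u t))\<^sup>2)"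
    by (rule infsum_cong_neutral) (auto simp: Proj_def)
  finally show ?thesis .
qed

lemma infsum_UN_fin:
  assumes "finite I" "\<forall>i\<in>I. \<forall>j\<in>I. i \<noteq> j \<longrightarrow> S i \<inter> S j = {}" "u \<in> l2"
  shows "(\<Sum>i\<in>I. (\<Sum>\<^sub>\<infinity>t\<in>S i. (cmod (u t))\<^sup>2)) = (\<Sum>\<^sub>\<infinity>t\<in>(\<Union>i\<in>I. S i). (cmod (u t))\<^sup>2)"
  using assms(1,2)
proof (induction I rule: finite_induct)
  case empty then show ?case by simp
next
  case (insert x I)
  have "\<forall>i\<in>I. S x \<inter> S i = {}"
  proof
    fix i assume "i \<in> I"
    then have "i \<noteq> x" using insert.hyps(2) by auto
    then show "S x \<inter> S i = {}" using insert.prems \<open>i \<in> I\<close> by simp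
  qed
  then have d: "S x \<inter> (\<Union>i\<in>I. S i) = {}" by auto
  have IH: "(\<Sum>i\<in>I. (\<Sum>\<^sub>\<infinity>t\<in>S i. (cmod (u t))\<^sup>2)) = (\<Sum>\<^sub>\<infinity>t\<in>(\<Union>i\<in>I. S i). (cmod (u t))\<^sup>2)"
    by (rule insert.IH) (use insert.prems in simp)
  have "(\<Sum>\<^sub>\<infinity>t\<in>(\<Union>i\<in>insert x I. S i). (cmod (u t))\<^sup>2) = (\<Sum>\<^sub>\<infinity>t\<in>(S x \<union> (\<Union>i\<in>I. S i)). (cmod (u t))\<^sup>2)"
    by simp
  also have "\<dots> = (\<Sum>\<^sub>\<infinity>t\<in>S x. (cmod (u t))\<^sup>2) + (\<Sum>\<^sub>\<infinity>t\<in>(\<Union>i\<in>I. S i). (cmod (u t))\<^sup>2)"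
    by (rule infsum_Un_disjoint[OF l2_summable[OF assms(3)] l2_summable[OF assms(3)] d])
  finally show ?case using IH insert.hyps by simp
qed

lemma proj_sum_le:
  assumes "finite I" "\<forall>i\<in>I. \<forall>j\<in>I. i \<noteq> j \<longrightarrow> S i \<inter> S j = {}" "u \<in> l2"
  shows "(\<Sum>i\<in>I. (l2norm (Proj (S i) u))\<^sup>2) \<le> (l2norm u)\<^sup>2"
proof -
  have "(\<Sum>i\<in>I. (l2norm (Proj (S i) u))\<^sup>2) = (\<Sum>\<^sub>\<infinity>t\<in>(\<Union>i\<in>I. S i). (cmod (u t))\<^sup>2)"
    using infsum_UN_fin[OF assms] projnorm_sq[OF assms(3)] by simp
  also have "\<dots> \<le> (\<Sum>\<^sub>\<infinity>t. (cmod (u t))\<^sup>2)"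
    by (rule infsum_mono2[OF l2_summable[OF assms(3)] l2_summable[OF assms(3)]]) auto
  also have "\<dots> = (l2norm u)\<^sup>2" by (simp add: l2norm_sq)
  finally show ?thesis .
qed

lemma block_diag_bound:
  fixes S :: "nat \<Rightarrow> 'a set"
  assumes disj: "\<And>i j. i \<noteq> j \<Longrightarrow> S i \<inter> S j = {}" and cover: "\<And>t. \<exists>i. t \<in> S i"
    and u: "u \<in> l2" and D: "0 \<le> D"
    and z: "\<And>i. z i \<in> l2 \<and> l2norm (z i) \<le> D * l2norm (Proj (S i) u)"
    and x: "\<And>i t. t \<in> S i \<Longrightarrow> x t = z i t"
  shows "x \<in> l2 \<and> l2norm x \<le> D * l2norm u"
proof (rule l2I)
  show "0 \<le> D * l2norm u" using D by simp
  fix G :: "'a set" assume G: "finite G"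
  define N where "N = {i. G \<inter> S i \<noteq> {}}"
  define idx where "idx t = (SOME i. t \<in> S i)" for t
  have idx: "t \<in> S i \<Longrightarrow> idx t = i" for t i
    unfolding idx_def using disj by (metis (mono_tags, lifting) disjoint_iff someI)
  have "N \<subseteq> idx ` G" unfolding N_def using idx by blast
  then have Nfin: "finite N" using G finite_surj by blast
  have Gsplit: "G = (\<Union>i\<in>N. G \<inter> S i)" unfolding N_def using cover by blast
  have "(\<Sum>t\<in>G. (cmod (x t))\<^sup>2) = (\<Sum>i\<in>N. \<Sum>t\<in>G \<inter> S i. (cmod (x t))\<^sup>2)"
    by (subst Gsplit, rule sum.UNION_disjoint) (use G Nfin disj in auto)
  also have "\<dots> \<le> (\<Sum>i\<in>N. D\<^sup>2 * (l2norm (Proj (S i) u))\<^sup>2)"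
  proof (rule sum_mono)
    fix i
    have "(\<Sum>t\<in>G \<inter> S i. (cmod (x t))\<^sup>2) = (\<Sum>t\<in>G \<inter> S i. (cmod (z i t))\<^sup>2)"
      using x by (intro sum.cong) auto
    also have "\<dots> \<le> (l2norm (z i))\<^sup>2" using l2_finsum_le z G by blast
    also have "\<dots> \<le> (D * l2norm (Proj (S i) u))\<^sup>2" using z by (intro power_mono) auto
    finally show "(\<Sum>t\<in>G \<inter> S i. (cmod (x t))\<^sup>2) \<le> D\<^sup>2 * (l2norm (Proj (S i) u))\<^sup>2"
      by (simp add: power_mult_distrib)
  qed
  also have "\<dots> \<le> D\<^sup>2 * (l2norm u)\<^sup>2"
    using proj_sum_le[OF Nfin _ u, of S] disj by (simp add: sum_distrib_left[symmetric] mult_left_mono)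
  finally show "(\<Sum>t\<in>G. (cmod (x t))\<^sup>2) \<le> (D * l2norm u)\<^sup>2" by (simp add: power_mult_distrib)
qed

lemma gmul_single: "t \<in> gmul X {g} \<longleftrightarrow> t + - g \<in> (X::'g::group_add set)"
proof
  assume "t \<in> gmul X {g}"
  then obtain a where "a \<in> X" "t = a + g" unfolding gmul_def by blast
  then show "t + - g \<in> X" by (simp add: add.assoc)
next
  assume "t + - g \<in> X"
  moreover have "t = (t + - g) + g" by (simp add: add.assoc)
  ultimately show "t \<in> gmul X {g}" unfolding gmul_def by blast
qed

lemma gmul_I: "a \<in> X \<Longrightarrow> b \<in> Z \<Longrightarrow> a + b \<in> gmul X Z"
  unfolding gmul_def by blast

lemma ginv_I: "a \<in> X \<Longrightarrow> - a \<in> ginv X"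
  unfolding ginv_def by blast

lemma Proj_Rsh: "Proj Y (Rsh g u) = Rsh g (Proj (gmul Y {g}) u)"
  by (rule ext) (simp add: Proj_def Rsh_def gmul_single add.assoc)

lemma Rsh_Proj: "Rsh (- g) (Proj Y z) = Proj (gmul Y {g}) (Rsh (- g) z)"
  by (rule ext) (simp add: Proj_def Rsh_def gmul_single)

lemma Omega_le_mono: "m \<le> n \<Longrightarrow> Omega_le \<Omega> m \<subseteq> Omega_le \<Omega> n"
  unfolding Omega_le_def by (auto intro: le_trans)

lemma zero_Omega_le: "0 \<in> Omega_le \<Omega> n"
  unfolding Omega_le_def by (auto intro!: bexI[of _ 0])

lemma finite_stage_choice:
  assumes "finite F" "\<And>f. f \<in> F \<Longrightarrow> \<exists>k::nat. P f k" "\<And>f k k'. P f k \<Longrightarrow> k \<le> k' \<Longrightarrow> P f k'"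
  shows "\<exists>K. \<forall>f\<in>F. P f K"
  using assms(1,2)
proof (induction F rule: finite_induct)
  case empty then show ?case by simp
next
  case (insert x F)
  obtain K where K: "\<forall>f\<in>F. P f K" using insert by blast
  obtain k where k: "P x k" using insert.prems by blast
  have "\<forall>f\<in>insert x F. P f (max K k)"
  proof
    fix f assume "f \<in> insert x F"
    then show "P f (max K k)"
    proof
      assume "f = x" then show ?thesis using assms(3)[OF k] by simp
    next
      assume "f \<in> F" then show ?thesis using assms(3)[OF K[rule_format, OF \<open>f \<in> F\<close>]] by simp
    qed
  qed
  then show ?case by blast
qed

lemma Zset_mem:
  assumes "a \<in> Omega_le \<Omega> n" "b \<in> Y n"
  shows "a + b \<in> Zset \<Omega> Y n"
proof -
  let ?W = "Y n \<union> Omega_le \<Omega> n"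
  have w1: "a \<in> ?W" "b \<in> ?W" "0 \<in> ?W" using assms zero_Omega_le by auto
  have "(a + - 0) + b \<in> gmul (gmul ?W (ginv ?W)) ?W"
    by (rule gmul_I[OF gmul_I[OF w1(1) ginv_I[OF w1(3)]] w1(2)])
  then show ?thesis unfolding Zset_def Let_def by simp
qed

locale block_setting =
  fixes \<Omega> :: "'g::group_add set" and Y :: "nat \<Rightarrow> 'g set" and v :: "nat \<Rightarrow> 'g"
  assumes Om_gen: "(\<Union>k\<in>{1..}. Omega_pow \<Omega> k) = UNIV"
    and v_infl: "\<And>m n. 1 \<le> m \<Longrightarrow> 1 \<le> n \<Longrightarrow> m \<noteq> n \<Longrightarrow>
        gmul (Zset \<Omega> Y m) {- v m} \<inter> gmul (Zset \<Omega> Y n) {- v n} = {}"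
begin

definition block_set :: "nat \<Rightarrow> 'g set" where "block_set n = gmul (Y n) {- v n}"

definition block_op :: "'g lop \<Rightarrow> nat \<Rightarrow> 'g lop" where
  "block_op A n u = Rsh (v n) (Proj (Y n) (A (Proj (Y n) (Rsh (- v n) u))))"

definition Op_ext :: "'g lop \<Rightarrow> 'g lop" where
  "Op_ext A = (\<lambda>u t. Op_seq v Y (\<lambda>n. Proj (Y n) \<circ> A \<circ> Proj (Y n)) u t + Proj (Gamma' Y v) u t)"

lemma block_set_mem: "t \<in> block_set n \<longleftrightarrow> t + v n \<in> Y n"
  unfolding block_set_def gmul_single by simp

lemma block_set_sub: "block_set n \<subseteq> gmul (Zset \<Omega> Y n) {- v n}"
  using Zset_mem[OF zero_Omega_le] unfolding block_set_def gmul_def by fastforce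

lemma block_set_disj: "1 \<le> m \<Longrightarrow> 1 \<le> n \<Longrightarrow> m \<noteq> n \<Longrightarrow> block_set m \<inter> block_set n = {}"
  using v_infl[of m n] block_set_sub[of m] block_set_sub[of n] by blast

lemma Gamma'_mem: "t \<in> Gamma' Y v \<longleftrightarrow> (\<forall>n\<ge>1. t \<notin> block_set n)"
  unfolding Gamma'_def block_set_def by auto

lemma block_op_out: "t \<notin> block_set n \<Longrightarrow> block_op A n u t = 0"
  unfolding block_op_def Rsh_def block_set_mem by (simp add: Proj_def)

(* Pointwise description of Op(A) + P_Gamma': on X_n it is the n-th block, on Gamma' the
   identity; the defining series has at most one nonzero term. *)
lemma Op_seq_in_block:
  assumes "1 \<le> n" "t \<in> block_set n"
  shows "Op_seq v Y (\<lambda>n. Proj (Y n) \<circ> A \<circ> Proj (Y n)) u t = block_op A n u t"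
proof -
  have "(\<lambda>i. if i = 0 then 0 else Rsh (v i) ((\<lambda>n. Proj (Y n) \<circ> A \<circ> Proj (Y n)) i (Proj (Y i) (Rsh (- v i) u))) t)
        = (\<lambda>i. if i = n then block_op A n u t else 0)"
  proof (rule ext)
    fix i
    have "t \<notin> block_set i" if "i \<noteq> n" "i \<noteq> 0" using block_set_disj[of i n] assms that by auto
    then show "(if i = 0 then 0 else Rsh (v i) ((\<lambda>n. Proj (Y n) \<circ> A \<circ> Proj (Y n)) i (Proj (Y i) (Rsh (- v i) u))) t)
        = (if i = n then block_op A n u t else 0)"
      using assms block_op_out[of t i A u] by (auto simp: block_op_def)
  qed
  moreover have "(\<lambda>i. if i = n then block_op A n u t else 0) sums block_op A n u t"
    using sums_single[of n "\<lambda>_. block_op A n u t"] by simp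
  ultimately show ?thesis unfolding Op_seq_def by (simp add: sums_iff)
qed

lemma Op_seq_outside:
  assumes "\<forall>n\<ge>1. t \<notin> block_set n"
  shows "Op_seq v Y (\<lambda>n. Proj (Y n) \<circ> A \<circ> Proj (Y n)) u t = 0"
proof -
  have "(\<lambda>i. if i = 0 then 0 else Rsh (v i) ((\<lambda>n. Proj (Y n) \<circ> A \<circ> Proj (Y n)) i (Proj (Y i) (Rsh (- v i) u))) t)
        = (\<lambda>i. 0)"
    using block_op_out[of t _ A u] assms by (auto simp: block_op_def intro!: ext)
  then show ?thesis unfolding Op_seq_def by simp
qed

lemma Op_ext_in_block: "1 \<le> n \<Longrightarrow> t \<in> block_set n \<Longrightarrow> Op_ext A u t = block_op A n u t"
  unfolding Op_ext_def using Op_seq_in_block[of n t A u] Gamma'_mem[of t] by (auto simp: Proj_def)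

lemma Op_ext_outside: "\<forall>n\<ge>1. t \<notin> block_set n \<Longrightarrow> Op_ext A u t = u t"
  unfolding Op_ext_def using Op_seq_outside[of t A u] Gamma'_mem[of t] by (auto simp: Proj_def)

lemma block_op_zero:
  assumes "lin A" "\<And>s. s \<in> block_set n \<Longrightarrow> u s = 0"
  shows "block_op A n u = (\<lambda>t. 0)"
proof -
  have "Proj (Y n) (Rsh (- v n) u) = (\<lambda>t. 0)"
    using assms(2) unfolding Proj_def Rsh_def block_set_mem by (auto simp: add.assoc)
  then show ?thesis unfolding block_op_def using lin_zero[OF assms(1)] by (simp add: Proj_def Rsh_def)
qed

lemma Op_ext_local:
  assumes "lin A" "1 \<le> n" "\<And>m s. 1 \<le> m \<Longrightarrow> m \<noteq> n \<Longrightarrow> s \<in> block_set m \<Longrightarrow> u s = 0"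
  shows "Op_ext A u = (\<lambda>t. block_op A n u t + Proj (Gamma' Y v) u t)"
proof (rule ext)
  fix t
  show "Op_ext A u t = block_op A n u t + Proj (Gamma' Y v) u t"
  proof (cases "\<exists>m\<ge>1. t \<in> block_set m")
    case True
    then obtain m where m: "1 \<le> m" "t \<in> block_set m" by blast
    have tg: "t \<notin> Gamma' Y v" using m Gamma'_mem by auto
    show ?thesis
    proof (cases "m = n")
      case True then show ?thesis using Op_ext_in_block[OF m] tg by (simp add: Proj_def)
    next
      case False
      have "block_op A m u = (\<lambda>t. 0)" by (rule block_op_zero[OF assms(1)]) (use assms(3) m False in auto)
      moreover have "t \<notin> block_set n" using block_set_disj[of m n] m assms(2) False by auto
      ultimately show ?thesis using Op_ext_in_block[OF m] tg block_op_out[of t n A u] by (simp add: Proj_def)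
    qed
  next
    case False
    then show ?thesis
      using Op_ext_outside[of t A u] Gamma'_mem[of t] block_op_out[of t n A u] assms(2)
      by (auto simp: Proj_def)
  qed
qed

lemma block_op_l2:
  assumes "bounded_op A C" "u \<in> l2"
  shows "block_op A n u \<in> l2" "l2norm (block_op A n u) \<le> C * l2norm (Proj (block_set n) u)"
proof -
  have e: "Proj (Y n) (Rsh (- v n) u) = Rsh (- v n) (Proj (block_set n) u)"
    by (rule ext) (simp add: Proj_def Rsh_def block_set_mem add.assoc)
  have pl: "Proj (block_set n) u \<in> l2" using Proj_l2[OF assms(2)] by simp
  have a: "Proj (Y n) (Rsh (- v n) u) \<in> l2" unfolding e using Rsh_l2[OF pl] by simp
  note B = bounded_opD(2)[OF assms(1)]
  have Al: "A (Proj (Y n) (Rsh (- v n) u)) \<in> l2" using op_norm_leD(1)[OF B a] .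
  show "block_op A n u \<in> l2" unfolding block_op_def by (rule Rsh_l2(1)[OF Proj_l2(1)[OF Al]])
  have "l2norm (block_op A n u) = l2norm (Proj (Y n) (A (Proj (Y n) (Rsh (- v n) u))))"
    unfolding block_op_def by (rule Rsh_l2(2)[OF Proj_l2(1)[OF Al]])
  also have "\<dots> \<le> l2norm (A (Proj (Y n) (Rsh (- v n) u)))" using Proj_l2(2)[OF Al] .
  also have "\<dots> \<le> C * l2norm (Proj (Y n) (Rsh (- v n) u))" using op_norm_leD(2)[OF B a] .
  also have "\<dots> = C * l2norm (Proj (block_set n) u)" unfolding e using Rsh_l2(2)[OF pl] by simp
  finally show "l2norm (block_op A n u) \<le> C * l2norm (Proj (block_set n) u)" .
qed

lemma block_op_lin:
  assumes "lin A" "u \<in> l2" "w \<in> l2"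
  shows "block_op A n (\<lambda>t. u t + w t) = (\<lambda>t. block_op A n u t + block_op A n w t)"
    and "block_op A n (\<lambda>t. c * u t) = (\<lambda>t. c * block_op A n u t)"
proof -
  have pu: "Proj (Y n) (Rsh (- v n) u) \<in> l2" "Proj (Y n) (Rsh (- v n) w) \<in> l2"
    using Proj_l2(1)[OF Rsh_l2(1)[OF assms(2)]] Proj_l2(1)[OF Rsh_l2(1)[OF assms(3)]] by auto
  show "block_op A n (\<lambda>t. u t + w t) = (\<lambda>t. block_op A n u t + block_op A n w t)"
    unfolding block_op_def Rsh_add Proj_add linD(1)[OF assms(1) pu] ..
  show "block_op A n (\<lambda>t. c * u t) = (\<lambda>t. c * block_op A n u t)"
    unfolding block_op_def Rsh_scale Proj_scale linD(2)[OF assms(1) pu] ..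
qed

lemma Op_ext_lin:
  assumes "lin A" shows "lin (Op_ext A)"
  unfolding lin_def
proof (intro conjI ballI allI ext)
  fix u w :: "'g \<Rightarrow> complex" and t assume u: "u \<in> l2" and w: "w \<in> l2"
  show "Op_ext A (\<lambda>t. u t + w t) t = Op_ext A u t + Op_ext A w t"
    using Op_ext_in_block Op_ext_outside block_op_lin(1)[OF assms u w] by (cases "\<exists>m\<ge>1. t \<in> block_set m") auto
next
  fix u :: "'g \<Rightarrow> complex" and c t assume u: "u \<in> l2"
  show "Op_ext A (\<lambda>t. c * u t) t = c * Op_ext A u t"
    using Op_ext_in_block Op_ext_outside block_op_lin(2)[OF assms u u] by (cases "\<exists>m\<ge>1. t \<in> block_set m") auto
qed

(* Op(A) + P_Gamma' is bounded: it acts blockwise on the disjoint cover Gamma', X_1, X_2, ... *)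
lemma Op_ext_bounded:
  assumes A: "bounded_op A C"
  shows "bounded_op (Op_ext A) (C + 1)"
proof -
  have C0: "0 \<le> C" using bounded_opD(3)[OF A] .
  define S where "S i = (if i = 0 then Gamma' Y v else block_set i)" for i
  define z where "z i u = (if i = 0 then Proj (Gamma' Y v) u else block_op A i u)" for i u
  have bound: "Op_ext A u \<in> l2 \<and> l2norm (Op_ext A u) \<le> (C + 1) * l2norm u" if u: "u \<in> l2" for u
  proof (rule block_diag_bound[where S=S and z="\<lambda>i. z i u", OF _ _ u])
    show "S i \<inter> S j = {}" if "i \<noteq> j" for i j
      using that block_set_disj[of i j] Gamma'_mem unfolding S_def by auto
    show "\<exists>i. t \<in> S i" for t
      using Gamma'_mem[of t] unfolding S_def by (metis not_one_le_zero)
    show "z i u \<in> l2 \<and> l2norm (z i u) \<le> (C + 1) * l2norm (Proj (S i) u)" for i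
    proof (cases "i = 0")
      case True
      have "l2norm (Proj (Gamma' Y v) u) \<le> (C + 1) * l2norm (Proj (Gamma' Y v) u)"
        using C0 by (simp add: distrib_right)
      then show ?thesis using Proj_l2[OF u, of "Gamma' Y v"] True unfolding S_def z_def by simp
    next
      case False
      have "C * l2norm (Proj (block_set i) u) \<le> (C + 1) * l2norm (Proj (block_set i) u)"
        by (simp add: mult_right_mono)
      then show ?thesis using block_op_l2[OF A u, of i] False unfolding S_def z_def by auto
    qed
    show "Op_ext A u t = z i u t" if "t \<in> S i" for i t
      using that Op_ext_in_block[of i t A u] Op_ext_outside[of t A u] Gamma'_mem[of t]
      unfolding S_def z_def by (cases "i = 0") (auto simp: Proj_def)
  qed (use C0 in simp)
  show ?thesis
    unfolding bounded_op_def op_norm_le_def using Op_ext_lin[OF bounded_opD(1)[OF A]] bound C0 by auto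
qed

end

context block_setting
begin

lemma block_op_inner:
  assumes "is_adjoint A A'" "x \<in> l2" "y \<in> l2"
  shows "l2inner (block_op A n x) y = l2inner x (block_op A' n y)"
proof -
  have px: "Proj (Y n) (Rsh (- v n) x) \<in> l2" using Proj_l2(1)[OF Rsh_l2(1)[OF assms(2)]] .
  have py: "Proj (Y n) (Rsh (- v n) y) \<in> l2" using Proj_l2(1)[OF Rsh_l2(1)[OF assms(3)]] .
  have "l2inner (block_op A n x) y = l2inner (Proj (Y n) (A (Proj (Y n) (Rsh (- v n) x)))) (Rsh (- v n) y)"
    unfolding block_op_def by (simp add: inner_Rsh)
  also have "\<dots> = l2inner (A (Proj (Y n) (Rsh (- v n) x))) (Proj (Y n) (Rsh (- v n) y))"
    by (simp add: inner_Proj)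
  also have "\<dots> = l2inner (Proj (Y n) (Rsh (- v n) x)) (A' (Proj (Y n) (Rsh (- v n) y)))"
    using assms(1) px py unfolding is_adjoint_def by blast
  also have "\<dots> = l2inner (Rsh (- v n) x) (Proj (Y n) (A' (Proj (Y n) (Rsh (- v n) y))))"
    by (simp add: inner_Proj)
  also have "\<dots> = l2inner x (block_op A' n y)"
    unfolding block_op_def by (simp add: inner_Rsh_right)
  finally show ?thesis .
qed

lemma Op_ext_delta_in_block:
  assumes A: "lin A" and n: "1 \<le> n" "t \<in> block_set n"
  shows "Op_ext A (delta t) = block_op A n (delta t)"
proof -
  have z: "delta t s = 0" if "1 \<le> m" "m \<noteq> n" "s \<in> block_set m" for m s
    using block_set_disj[of m n] that n unfolding delta_def by auto
  have "Proj (Gamma' Y v) (delta t) = (\<lambda>s. 0)"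
    using n Gamma'_mem[of t] by (auto simp: Proj_def delta_def)
  moreover have "Op_ext A (delta t) = (\<lambda>s. block_op A n (delta t) s + Proj (Gamma' Y v) (delta t) s)"
    by (rule Op_ext_local[OF A n(1)]) (use z in blast)
  ultimately show ?thesis by simp
qed

lemma Op_ext_delta_outside:
  assumes A: "lin A" and t: "\<forall>n\<ge>1. t \<notin> block_set n"
  shows "Op_ext A (delta t) = delta t"
proof -
  have "block_op A 1 (delta t) = (\<lambda>s. 0)"
    by (rule block_op_zero[OF A]) (use t in \<open>auto simp: delta_def\<close>)
  moreover have "Proj (Gamma' Y v) (delta t) = delta t"
    using t Gamma'_mem by (auto simp: Proj_def delta_def)
  moreover have "Op_ext A (delta t) = (\<lambda>s. block_op A 1 (delta t) s + Proj (Gamma' Y v) (delta t) s)"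
    by (rule Op_ext_local[OF A]) (use t in \<open>auto simp: delta_def\<close>)
  ultimately show ?thesis by simp
qed

lemma adj_Op_ext:
  assumes A: "bounded_op A C" and w: "w \<in> l2"
  shows "adj (Op_ext A) w = Op_ext (adj A) w"
proof (rule ext)
  fix t
  show "adj (Op_ext A) w t = Op_ext (adj A) w t"
  proof (cases "\<exists>n\<ge>1. t \<in> block_set n")
    case True
    then obtain n where n: "1 \<le> n" "t \<in> block_set n" by blast
    have "adj (Op_ext A) w t = l2inner w (block_op A n (delta t))"
      unfolding adj_def Op_ext_delta_in_block[OF bounded_opD(1)[OF A] n] ..
    also have "\<dots> = cnj (l2inner (delta t) (block_op (adj A) n w))"
      using block_op_inner[OF adj_is_adjoint[OF A] delta_l2 w] by (simp add: inner_cnj[of w])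
    also have "\<dots> = Op_ext (adj A) w t" using Op_ext_in_block[OF n] by (simp add: inner_delta_left)
    finally show ?thesis .
  next
    case False
    then have "Op_ext A (delta t) = delta t" by (intro Op_ext_delta_outside[OF bounded_opD(1)[OF A]]) auto
    then show ?thesis unfolding adj_def using Op_ext_outside False by (simp add: inner_delta_right)
  qed
qed




lemma block_conj:
  "Rsh (- (v m + g)) (block_op A m (Rsh (v m + g) u)) =
   Proj (gmul (Y m) {g}) (shift_conj g A (Proj (gmul (Y m) {g}) u))"
proof -
  have e1: "Rsh (- v m) (Rsh (v m + g) u) = Rsh g u"
    by (simp add: Rsh_comp add.assoc[symmetric])
  have e2: "Rsh (- (v m + g)) (Rsh (v m) z) = Rsh (- g) z" for z :: "'g \<Rightarrow> complex"
    by (simp add: Rsh_comp minus_add add.assoc)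
  have "Rsh (- (v m + g)) (block_op A m (Rsh (v m + g) u)) =
      Rsh (- g) (Proj (Y m) (A (Rsh g (Proj (gmul (Y m) {g}) u))))"
    unfolding block_op_def e1 e2 Proj_Rsh ..
  also have "\<dots> = Proj (gmul (Y m) {g}) (Rsh (- g) (A (Rsh g (Proj (gmul (Y m) {g}) u))))"
    by (rule Rsh_Proj)
  finally show ?thesis by simp
qed

lemma enlarged_block_disj:
  "s \<in> gmul (Zset \<Omega> Y n) {- v n} \<Longrightarrow> 1 \<le> m \<Longrightarrow> 1 \<le> n \<Longrightarrow> m \<noteq> n \<Longrightarrow> s \<notin> block_set m"
  using v_infl[of m n] block_set_sub[of m] by blast

(* The point is that R_h u is supported in the
   enlarged block Z_n v_n^-1, hence sees only the n-th block and Gamma'. *)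
lemma conj_Op_ext_finite:
  assumes A: "lin A" and n1: "1 \<le> n" and eta: "- \<eta> \<in> Y n"
    and F: "\<And>t. t \<notin> F \<Longrightarrow> u t = 0" and FO: "\<And>f. f \<in> F \<Longrightarrow> f + - w \<in> Omega_le \<Omega> n"
  shows "shift_conj (v n + (\<eta> + w)) (Op_ext A) u =
         compress (gmul (Y n) {\<eta> + w}) (shift_conj (\<eta> + w) A) u"
proof -
  define g where "g = \<eta> + w"
  define h where "h = v n + g"
  define Z where "Z = gmul (Y n) {g}"
  define W where "W = gmul (Zset \<Omega> Y n) {- v n}"
  have inW: "f + - h \<in> W" if f: "f \<in> F" for f
  proof -
    have "(f + - w) + - \<eta> \<in> Zset \<Omega> Y n" by (rule Zset_mem[where Y=Y, OF FO[OF f] eta])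
    moreover have "f + - h + v n = (f + - w) + - \<eta>"
      unfolding h_def g_def by (simp only: minus_add add.assoc add.left_inverse add_0_right)
    ultimately show ?thesis unfolding W_def gmul_single by simp
  qed
  have zero: "Rsh h u s = 0" if "1 \<le> m" "m \<noteq> n" "s \<in> block_set m" for m s
  proof (cases "s + h \<in> F")
    case True
    then have "s \<in> W" using inW[OF True] by (simp add: add.assoc)
    then show ?thesis using enlarged_block_disj[of s n m] that n1 unfolding W_def by blast
  qed (use F in \<open>simp add: Rsh_def\<close>)
  have loc: "Op_ext A (Rsh h u) = (\<lambda>t. block_op A n (Rsh h u) t + Proj (Gamma' Y v) (Rsh h u) t)"
    by (rule Op_ext_local[OF A n1]) (use zero in blast)
  have gam: "Rsh (- h) (Proj (Gamma' Y v) (Rsh h u)) t = u t - Proj Z u t" for t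
  proof (cases "t \<in> F")
    case True
    have "t + - h \<in> Gamma' Y v \<longleftrightarrow> t + - h \<notin> block_set n"
      using Gamma'_mem enlarged_block_disj[of "t + - h" n] inW[OF True] n1 unfolding W_def by blast
    moreover have "t + - h \<in> block_set n \<longleftrightarrow> t \<in> Z"
    proof -
      have "t + - h + v n = t + - g" unfolding h_def by (simp add: minus_add add.assoc)
      then show ?thesis unfolding block_set_mem Z_def gmul_single by simp
    qed
    ultimately show ?thesis by (simp add: Rsh_def Proj_def add.assoc)
  qed (use F in \<open>simp add: Rsh_def Proj_def\<close>)
  have "shift_conj h (Op_ext A) u t = compress Z (shift_conj g A) u t" for t
  proof -
    have "shift_conj h (Op_ext A) u t =
        Rsh (- h) (block_op A n (Rsh h u)) t + Rsh (- h) (Proj (Gamma' Y v) (Rsh h u)) t"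
      using loc by (simp add: Rsh_def)
    also have "\<dots> = compress Z (shift_conj g A) u t"
      unfolding gam using block_conj[of n g A u] unfolding h_def Z_def by simp
    finally show ?thesis .
  qed
  then show ?thesis unfolding h_def g_def Z_def by blast
qed

lemma conj_Op_ext_strong_conv:
  assumes A: "bounded_op A C"
    and m1: "\<And>r. 1 \<le> m r" and mmono: "strict_mono m"
    and eta: "\<And>r. - \<eta> r \<in> Y (m r)"
    and hdef: "\<And>r. h r = v (m r) + (\<eta> r + w)"
    and PY: "strong_conv (\<lambda>r. Proj (gmul (Y (m r)) {\<eta> r + w})) (Proj YY)"
    and GA: "strong_conv (\<lambda>r. shift_conj (\<eta> r + w) A) Ag"
  shows "strong_conv (\<lambda>r. shift_conj (h r) (Op_ext A)) (compress YY Ag)"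
proof (rule strong_conv_eventually_agree)
  show "bounded_op (shift_conj (h r) (Op_ext A)) (C + 1)" for r using conj_bounded[OF Op_ext_bounded[OF A]] .
  show "bounded_op (compress (gmul (Y (m r)) {\<eta> r + w}) (shift_conj (\<eta> r + w) A)) (C + 2)" for r
    using compress_bounded[OF conj_bounded[OF A]] .
  show "strong_conv (\<lambda>r. compress (gmul (Y (m r)) {\<eta> r + w}) (shift_conj (\<eta> r + w) A)) (compress YY Ag)"
    by (rule compress_strong_conv[OF PY GA conj_bounded[OF A]])
  fix u :: "'g \<Rightarrow> complex" and F assume F: "finite F" "\<And>t. t \<notin> F \<Longrightarrow> u t = 0"
  obtain K where K: "\<And>f. f \<in> F \<Longrightarrow> f + - w \<in> Omega_le \<Omega> K"
  proof -
    have "\<exists>K. \<forall>f\<in>F. f + - w \<in> Omega_le \<Omega> K"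
    proof (rule finite_stage_choice[OF F(1)])
      fix f
      have "f + - w \<in> (\<Union>k\<in>{1..}. Omega_pow \<Omega> k)" using Om_gen by simp
      then show "\<exists>k. f + - w \<in> Omega_le \<Omega> k" unfolding Omega_le_def by blast
    qed (use Omega_le_mono in blast)
    then show ?thesis using that by blast
  qed
  have "shift_conj (h r) (Op_ext A) u = compress (gmul (Y (m r)) {\<eta> r + w}) (shift_conj (\<eta> r + w) A) u"
    if r: "K \<le> r" for r
  proof -
    have "K \<le> m r" using seq_suble[OF mmono, of r] r by simp
    then have FO: "\<And>f. f \<in> F \<Longrightarrow> f + - w \<in> Omega_le \<Omega> (m r)" using K Omega_le_mono by blast
    show ?thesis
      unfolding hdef using conj_Op_ext_finite[OF bounded_opD(1)[OF A] m1[of r] eta[of r], where u=u and F=F, OF F(2) FO] .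
  qed
  then show "\<forall>\<^sub>F r in sequentially. shift_conj (h r) (Op_ext A) u =
      compress (gmul (Y (m r)) {\<eta> r + w}) (shift_conj (\<eta> r + w) A) u"
    unfolding eventually_sequentially by blast
qed

(* The limit operator formula (part (ii) of the theorem): the same argument applied to A and
   to its adjoint, together with the adjoint formula for Op(A) + P_Gamma'. *)
lemma limit_formula:
  assumes A: "bounded_op A C"
    and m1: "\<And>r. 1 \<le> m r" and mmono: "strict_mono m"
    and eta: "\<And>r. - \<eta> r \<in> Y (m r)"
    and hdef: "\<And>r. h r = v (m r) + (\<eta> r + w)"
    and PY: "strong_conv (\<lambda>r. Proj (gmul (Y (m r)) {\<eta> r + w})) (Proj YY)"
    and LA: "is_limit_op A (\<lambda>r. \<eta> r + w) Ag"
  shows "is_limit_op (Op_ext A) h (compress YY Ag)"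
proof -
  from LA obtain As Ags where GA: "strong_conv (\<lambda>r. shift_conj (\<eta> r + w) A) Ag"
    and As: "is_adjoint A As" and GAs0: "strong_conv (\<lambda>r. shift_conj (\<eta> r + w) As) Ags"
    unfolding is_limit_op_def by blast
  have GAs: "strong_conv (\<lambda>r. shift_conj (\<eta> r + w) (adj A)) Ags"
    by (rule strong_conv_cong[OF GAs0]) (simp_all add: adj_unique[OF As Rsh_l2(1)])
  have c1: "strong_conv (\<lambda>r. shift_conj (h r) (Op_ext A)) (compress YY Ag)"
    by (rule conj_Op_ext_strong_conv[OF A m1 mmono eta hdef PY GA])
  have "strong_conv (\<lambda>r. shift_conj (h r) (Op_ext (adj A))) (compress YY Ags)"
    by (rule conj_Op_ext_strong_conv[OF adj_bounded[OF A] m1 mmono eta hdef PY GAs])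
  then have c2: "strong_conv (\<lambda>r. shift_conj (h r) (adj (Op_ext A))) (compress YY Ags)"
    by (rule strong_conv_cong) (simp_all add: adj_Op_ext[OF A Rsh_l2(1)])
  have adjOp: "is_adjoint (Op_ext A) (adj (Op_ext A))" by (rule adj_is_adjoint[OF Op_ext_bounded[OF A]])
  have "is_adjoint (compress YY Ag) (compress YY Ags)"
    by (rule adjoint_limit[OF c1 c2 conj_adjoint[OF adjOp]])
  then show ?thesis unfolding is_limit_op_def using c1 c2 adjOp by blast
qed

end

lemma finite_gmul: "finite X \<Longrightarrow> finite Z \<Longrightarrow> finite (gmul X Z)"
proof -
  assume "finite X" "finite Z"
  moreover have "gmul X Z = (\<lambda>(a, b). a + b) ` (X \<times> Z)" unfolding gmul_def by auto
  ultimately show ?thesis by simp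
qed

lemma finite_Omega_pow: "finite \<Omega> \<Longrightarrow> finite (Omega_pow \<Omega> n)"
  by (induction n) (auto intro: finite_gmul)

lemma finite_Omega_le: "finite \<Omega> \<Longrightarrow> finite (Omega_le \<Omega> n)"
  unfolding Omega_le_def using finite_Omega_pow by auto

lemma tends_to_inf_finite:
  assumes "tends_to_inf h" "finite F"
  shows "finite {n. h n \<in> F}"
proof -
  obtain N where "\<And>n. N \<le> n \<Longrightarrow> h n \<notin> F" using assms unfolding tends_to_inf_def eventually_sequentially by blast
  then have "{n. h n \<in> F} \<subseteq> {..<N}" by (auto simp: not_le[symmetric])
  then show ?thesis using finite_subset by blast
qed


lemma choose_seq:
  fixes K :: "nat \<Rightarrow> nat"
  assumes inf: "\<And>M. infinite {n \<in> S. M < K n}"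
  shows "\<exists>\<psi>::nat \<Rightarrow> nat. strict_mono \<psi> \<and> strict_mono (\<lambda>j. K (\<psi> j)) \<and> (\<forall>j. \<psi> j \<in> S)"
proof -
  have ex: "\<exists>n. n \<in> S \<and> p < n \<and> K p < K n" for p
  proof -
    have "infinite {n \<in> S. K p < K n}" by (rule inf)
    then obtain n where "p < n" "n \<in> {n \<in> S. K p < K n}" using infinite_nat_iff_unbounded by blast
    then show ?thesis by blast
  qed
  obtain n0 where n0: "n0 \<in> S" using inf[of 0] by (metis (no_types, lifting) empty_Collect_eq finite.emptyI)
  define step where "step p = (SOME n. n \<in> S \<and> p < n \<and> K p < K n)" for p
  have st: "step p \<in> S" "p < step p" "K p < K (step p)" for p
    using someI_ex[OF ex[of p]] unfolding step_def by auto
  define psi where "psi = rec_nat n0 (\<lambda>_ p. step p)"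
  have ps: "psi 0 = n0" "psi (Suc j) = step (psi j)" for j unfolding psi_def by simp_all
  have "strict_mono psi" by (rule strict_monoI_Suc) (simp add: ps st)
  moreover have "strict_mono (\<lambda>j. K (psi j))" by (rule strict_monoI_Suc) (simp add: ps st)
  moreover have "\<forall>j. psi j \<in> S" by (intro allI, case_tac j) (simp_all add: ps st n0)
  ultimately show ?thesis by (intro exI[of _ psi] conjI)
qed


(* Since h tends to infinity, only finitely many h n lie in boundary blocks of index at
   most M (these blocks are finite). *)
lemma small_blocks_finite:
  fixes Y :: "nat \<Rightarrow> 'g::group_add set" and K :: "nat \<Rightarrow> nat"
  assumes hinf: "tends_to_inf h" and Y_fin: "\<And>n. 1 \<le> n \<Longrightarrow> finite (Y n)"
    and KE: "\<And>n. n \<in> S \<Longrightarrow> 1 \<le> K n \<and> E n \<in> ginv (bd_Om \<Omega> (Y (K n))) \<and> h n = v (K n) + E n + w"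
  shows "finite {n \<in> S. K n \<le> M}"
proof -
  define FM where "FM = (\<Union>k\<in>{1..M}. (\<lambda>e. v k + e + w) ` ginv (bd_Om \<Omega> (Y k)))"
  have "finite (ginv (bd_Om \<Omega> (Y k)))" if "1 \<le> k" for k
    using Y_fin[OF that] unfolding ginv_def bd_Om_def by (auto intro: finite_subset)
  then have "finite FM" unfolding FM_def by (intro finite_UN_I finite_imageI) auto
  moreover have "{n \<in> S. K n \<le> M} \<subseteq> {n. h n \<in> FM}"
  proof
    fix n assume "n \<in> {n \<in> S. K n \<le> M}"
    then have "K n \<in> {1..M}" "h n \<in> (\<lambda>e. v (K n) + e + w) ` ginv (bd_Om \<Omega> (Y (K n)))"
      using KE by auto
    then show "n \<in> {n. h n \<in> FM}" unfolding FM_def by blast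
  qed
  ultimately show ?thesis using tends_to_inf_finite[OF hinf] finite_subset by blast
qed

lemma boundary_subsequence:
  fixes Y :: "nat \<Rightarrow> 'g::group_add set" and h :: "nat \<Rightarrow> 'g"
  assumes Om_fin: "finite \<Omega>" and Y_fin: "\<And>n. 1 \<le> n \<Longrightarrow> finite (Y n)" and hinf: "tends_to_inf h"
    and inf: "infinite {n. \<exists>k\<ge>1. h n \<in> gmul (gmul {v k} (ginv (bd_Om \<Omega> (Y k)))) (Omega_le \<Omega> r)}"
  shows "\<exists>(k :: nat \<Rightarrow> nat) \<eta> w (\<psi> :: nat \<Rightarrow> nat). strict_mono k \<and> (\<forall>j. 1 \<le> k j) \<and> (\<forall>j. \<eta> j \<in> ginv (bd_Om \<Omega> (Y (k j)))) \<and>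
           strict_mono \<psi> \<and> (\<forall>j. v (k j) + \<eta> j + w = h (\<psi> j))"
proof -
  define S where "S = {n. \<exists>k\<ge>1. h n \<in> gmul (gmul {v k} (ginv (bd_Om \<Omega> (Y k)))) (Omega_le \<Omega> r)}"
  have "\<forall>n. \<exists>k e x. n \<in> S \<longrightarrow> 1 \<le> k \<and> e \<in> ginv (bd_Om \<Omega> (Y k)) \<and> x \<in> Omega_le \<Omega> r \<and> h n = v k + e + x"
    unfolding S_def gmul_def by blast
  then obtain K E W where KEW: "\<And>n. n \<in> S \<Longrightarrow> 1 \<le> K n \<and> E n \<in> ginv (bd_Om \<Omega> (Y (K n))) \<and>
      W n \<in> Omega_le \<Omega> r \<and> h n = v (K n) + E n + W n" by metis
  have "finite (W ` S)"
    using finite_subset[OF _ finite_Omega_le[OF Om_fin]] KEW by blast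
  then obtain n0 where "infinite {n \<in> S. W n = W n0}"
    using pigeonhole_infinite[of S W] inf unfolding S_def by blast
  then obtain w where infw: "infinite {n \<in> S. W n = w}" by blast
  define S' where "S' = {n \<in> S. W n = w}"
  have fin: "finite {n \<in> S'. K n \<le> M}" for M
    by (rule small_blocks_finite[where v=v and w=w and E=E, OF hinf Y_fin])
       (use KEW in \<open>auto simp: S'_def\<close>)
  have infK: "infinite {n \<in> S'. M < K n}" for M
  proof
    assume "finite {n \<in> S'. M < K n}"
    moreover have "S' = {n \<in> S'. M < K n} \<union> {n \<in> S'. K n \<le> M}" by auto
    ultimately have "finite S'" using fin[of M] by (metis finite_Un)
    then show False using infw unfolding S'_def by simp
  qed
  obtain \<psi> :: "nat \<Rightarrow> nat" where \<psi>: "strict_mono \<psi>" "strict_mono (\<lambda>j. K (\<psi> j))" "\<And>j. \<psi> j \<in> S'"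
    using choose_seq[of S' K, OF infK] by blast
  have KEWj: "1 \<le> K (\<psi> j) \<and> E (\<psi> j) \<in> ginv (bd_Om \<Omega> (Y (K (\<psi> j)))) \<and>
      v (K (\<psi> j)) + E (\<psi> j) + w = h (\<psi> j)" for j
  proof -
    have "\<psi> j \<in> S" "W (\<psi> j) = w" using \<psi>(3)[of j] unfolding S'_def by auto
    then show ?thesis using KEW by auto
  qed
  show ?thesis
    using \<psi>(1,2) KEWj by (intro exI[of _ "\<lambda>j. K (\<psi> j)"] exI[of _ "\<lambda>j. E (\<psi> j)"] exI[of _ w] exI[of _ \<psi>]) auto
qed

(* Along a subsequence, the projections onto any given sequence of sets converge strongly to a
   projection (diagonal argument on the indicator functions). *)
lemma proj_strong_limit_subseq:
  fixes Z :: "nat \<Rightarrow> 'g::countable set"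
  shows "\<exists>\<theta> YY. strict_mono \<theta> \<and> strong_conv (\<lambda>j. Proj (Z (\<theta> j))) (Proj YY)"
proof -
  define f where "f j t = (if t \<in> Z j then 1 else (0::complex))" for j t
  have "\<exists>\<theta>. strict_mono \<theta> \<and> (\<forall>t. convergent (\<lambda>j. f (\<theta> j) t))"
    by (rule pointwise_convergent_subseq[where M=1]) (simp add: f_def)
  then obtain \<theta> where \<theta>: "strict_mono \<theta>" "\<And>t. convergent (\<lambda>j. f (\<theta> j) t)" by blast
  define c where "c t = lim (\<lambda>j. f (\<theta> j) t)" for t
  have cv: "(\<lambda>j. f (\<theta> j) t) \<longlonglongrightarrow> c t" for t using \<theta>(2) unfolding c_def convergent_LIMSEQ_iff .
  have c01: "c t \<in> {0, 1}" for t
    by (rule closed_sequentially[OF finite_imp_closed _ cv]) (auto simp: f_def)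
  have "strong_conv (\<lambda>j. mult_op (f (\<theta> j))) (mult_op c)"
    by (rule mult_op_strong_conv[where M=1, OF _ cv]) (simp add: f_def)
  moreover have "mult_op (f j) = Proj (Z j)" for j
    unfolding f_def by (auto simp: mult_op_def Proj_def fun_eq_iff)
  moreover have "mult_op c = Proj {t. c t = 1}"
    using c01 by (auto simp: mult_op_def Proj_def fun_eq_iff)
  ultimately show ?thesis using \<theta>(1) by auto
qed

lemma ginv_bd_Om_mem: "e \<in> ginv (bd_Om \<Omega> X) \<Longrightarrow> - e \<in> X"
  unfolding ginv_def bd_Om_def by auto

context block_setting
begin

lemma limit_operator_converse:
  assumes A: "bounded_op A C" and k: "strict_mono k" "\<forall>j. 1 \<le> k j"
    and eta: "\<forall>j. \<eta> (k j) \<in> ginv (bd_Om \<Omega> (Y (k j)))"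
    and PY: "strong_conv (\<lambda>j. Proj (gmul (Y (k j)) {\<eta> (k j) + w})) (Proj YY)"
    and nn: "strict_mono nn" and LA: "is_limit_op A (\<lambda>r. \<eta> (k (nn r)) + w) Ag"
  shows "is_limit_op (Op_ext A) (\<lambda>r. v (k (nn r)) + \<eta> (k (nn r)) + w) (compress YY Ag)"
proof (rule limit_formula[OF A, where m="\<lambda>r. k (nn r)" and \<eta>="\<lambda>r. \<eta> (k (nn r))" and w=w])
  show "strict_mono (\<lambda>r. k (nn r))" using strict_mono_o[OF k(1) nn] by (simp add: o_def)
  show "strong_conv (\<lambda>r. Proj (gmul (Y (k (nn r))) {\<eta> (k (nn r)) + w})) (Proj YY)"
    using strong_conv_subseq[OF PY nn] by simp
qed (use k(2) eta LA in \<open>auto simp: add.assoc intro: ginv_bd_Om_mem\<close>)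

end

(* Part (i) needs a countable group: limit operators of A and strong limits of projections
   are obtained by diagonal arguments. *)
locale countable_block_setting = block_setting \<Omega> Y v
  for \<Omega> :: "'g::{group_add,countable} set" and Y :: "nat \<Rightarrow> 'g set" and v :: "nat \<Rightarrow> 'g"
begin

lemma limit_operator_structure:
  assumes Om_fin: "finite \<Omega>" and Y_fin: "\<And>n. 1 \<le> n \<Longrightarrow> finite (Y n)" and A_BDO: "A \<in> BDO"
    and hinf: "tends_to_inf h" and LB: "is_limit_op (Op_ext A) h B"
    and inf: "infinite {n. \<exists>k\<ge>1. h n \<in> gmul (gmul {v k} (ginv (bd_Om \<Omega> (Y k)))) (Omega_le \<Omega> r)}"
  shows "\<exists>k \<eta> w \<psi> YY \<phi> Ag. strict_mono k \<and> (\<forall>j. 1 \<le> k j) \<and>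
           (\<forall>j. \<eta> j \<in> ginv (bd_Om \<Omega> (Y (k j)))) \<and>
           strict_mono \<psi> \<and> (\<forall>j. v (k j) + \<eta> j + w = h (\<psi> j)) \<and>
           strong_conv (\<lambda>j. Proj (gmul (Y (k j)) {\<eta> j + w})) (Proj YY) \<and>
           strict_mono \<phi> \<and> is_limit_op A (\<lambda>j. \<eta> (\<phi> j) + w) Ag \<and>
           (\<forall>u\<in>l2. B u = compress YY Ag u)"
proof -
  obtain C where C: "bounded_op A C" using BDO_bounded[OF A_BDO] by blast
  obtain k \<eta> w and \<psi> :: "nat \<Rightarrow> nat" where k: "strict_mono k" "\<forall>j. 1 \<le> k j"
    and eta: "\<forall>j. \<eta> j \<in> ginv (bd_Om \<Omega> (Y (k j)))"
    and \<psi>: "strict_mono \<psi>" and h: "\<forall>j. v (k j) + \<eta> j + w = h (\<psi> j)"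
    using boundary_subsequence[OF Om_fin Y_fin hinf inf] by blast
  obtain \<theta> :: "nat \<Rightarrow> nat" and YY where \<theta>: "strict_mono \<theta>"
    and PY: "strong_conv (\<lambda>j. Proj (gmul (Y (k (\<theta> j))) {\<eta> (\<theta> j) + w})) (Proj YY)"
    using proj_strong_limit_subseq[of "\<lambda>j. gmul (Y (k j)) {\<eta> j + w}"] by blast
  obtain \<phi> Ag where \<phi>: "strict_mono \<phi>" and LA: "is_limit_op A (\<lambda>j. \<eta> (\<theta> (\<phi> j)) + w) Ag"
    using BDO_limit[OF A_BDO, of "\<lambda>j. \<eta> (\<theta> j) + w"] by blast
  have "is_limit_op (Op_ext A) (\<lambda>r. h (\<psi> (\<theta> (\<phi> r)))) (compress YY Ag)"
  proof (rule limit_formula[OF C, where m="\<lambda>r. k (\<theta> (\<phi> r))" and \<eta>="\<lambda>r. \<eta> (\<theta> (\<phi> r))" and w=w])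
    show "strict_mono (\<lambda>r. k (\<theta> (\<phi> r)))"
      using strict_mono_o[OF strict_mono_o[OF k(1) \<theta>] \<phi>] by (simp add: o_def)
    show "strong_conv (\<lambda>r. Proj (gmul (Y (k (\<theta> (\<phi> r)))) {\<eta> (\<theta> (\<phi> r)) + w})) (Proj YY)"
      using strong_conv_subseq[OF PY \<phi>] by simp
  qed (use k(2) eta h LA in \<open>auto simp: add.assoc intro: ginv_bd_Om_mem\<close>)
  moreover have "strict_mono (\<lambda>r. \<psi> (\<theta> (\<phi> r)))"
    using strict_mono_o[OF strict_mono_o[OF \<psi> \<theta>] \<phi>] by (simp add: o_def)
  ultimately have "\<forall>u\<in>l2. B u = compress YY Ag u"
    using strong_conv_unique strong_conv_subseq LB unfolding is_limit_op_def by blast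
  then show ?thesis
    using k eta \<psi> h \<theta> PY \<phi> LA strict_mono_o[OF k(1) \<theta>] strict_mono_o[OF \<psi> \<theta>]
    by (intro exI[of _ "\<lambda>j. k (\<theta> j)"] exI[of _ "\<lambda>j. \<eta> (\<theta> j)"] exI[of _ w]
        exI[of _ "\<lambda>j. \<psi> (\<theta> j)"] exI[of _ YY] exI[of _ \<phi>] exI[of _ Ag]) (auto simp: o_def)
qed

end

theorem mainTheorem8:
  fixes \<Omega> :: "'g::{group_add,countable} set"
    and Y :: "nat \<Rightarrow> 'g set" and v :: "nat \<Rightarrow> 'g" and A :: "'g lop"
  assumes Om_fin: "finite \<Omega>" and Om_e: "0 \<in> \<Omega>"
    and Om_gen: "(\<Union>k\<in>{1..}. Omega_pow \<Omega> k) = UNIV"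
    and Y_fin: "\<And>n. 1 \<le> n \<Longrightarrow> finite (Y n)"
    and Y_inc: "\<And>m n. 1 \<le> m \<Longrightarrow> m \<le> n \<Longrightarrow> Y m \<subseteq> Y n"
    and Y_union: "(\<Union>n\<in>{1..}. Y n) = UNIV"
    and v_infl: "\<And>m n. 1 \<le> m \<Longrightarrow> 1 \<le> n \<Longrightarrow> m \<noteq> n \<Longrightarrow>
        gmul (Zset \<Omega> Y m) {- v m} \<inter> gmul (Zset \<Omega> Y n) {- v n} = {}"
    and A_BDO: "A \<in> BDO"
  defines "OpA \<equiv> (\<lambda>u t. Op_seq v Y (\<lambda>n. Proj (Y n) \<circ> A \<circ> Proj (Y n)) u t
                          + Proj (Gamma' Y v) u t)"
  shows
   "(\<forall>h B r. tends_to_inf h \<and> is_limit_op OpA h B \<and>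
       infinite {n. \<exists>k\<ge>1. h n \<in> gmul (gmul {v k} (ginv (bd_Om \<Omega> (Y k)))) (Omega_le \<Omega> r)}
     \<longrightarrow> (\<exists>k \<eta> w \<psi> YY \<phi> Ag. strict_mono k \<and> (\<forall>j. 1 \<le> k j) \<and>
           (\<forall>j. \<eta> j \<in> ginv (bd_Om \<Omega> (Y (k j)))) \<and>
           strict_mono \<psi> \<and> (\<forall>j. v (k j) + \<eta> j + w = h (\<psi> j)) \<and>
           strong_conv (\<lambda>j. Proj (gmul (Y (k j)) {\<eta> j + w})) (Proj YY) \<and>
           strict_mono \<phi> \<and> is_limit_op A (\<lambda>j. \<eta> (\<phi> j) + w) Ag \<and>
           (\<forall>u\<in>l2. B u = (\<lambda>t. Proj YY (Ag (Proj YY u)) t + (u t - Proj YY u t)))))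
  \<and> (\<forall>k \<eta> w YY nn Ag. strict_mono k \<and> (\<forall>j. 1 \<le> k j) \<and>
       (\<forall>j. \<eta> (k j) \<in> ginv (bd_Om \<Omega> (Y (k j)))) \<and>
       strong_conv (\<lambda>j. Proj (gmul (Y (k j)) {\<eta> (k j) + w})) (Proj YY) \<and>
       strict_mono nn \<and> is_limit_op A (\<lambda>r. \<eta> (k (nn r)) + w) Ag
     \<longrightarrow> is_limit_op OpA (\<lambda>r. v (k (nn r)) + \<eta> (k (nn r)) + w)
           (\<lambda>u t. Proj YY (Ag (Proj YY u)) t + (u t - Proj YY u t)))"
proof -
  interpret countable_block_setting \<Omega> Y v by unfold_locales (use Om_gen v_infl in auto)
  have OpA: "OpA = Op_ext A" unfolding OpA_def Op_ext_def ..
  obtain C where C: "bounded_op A C" using BDO_bounded[OF A_BDO] by blast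
  show ?thesis
    unfolding OpA
    using limit_operator_structure[OF Om_fin Y_fin A_BDO] limit_operator_converse[OF C]
    by blast
qed

end
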